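(* Let $X \subseteq \mathbb{R}^n$ be a compact basic semi-algebraic set, let $Z \subseteq X$ be a compact basic semi-algebraic set, and let $f:\mathbb{R}^n\to\mathbb{R}^n$ be a polynomial map, defining the discrete-time system $x_{t+1}=f(x_t)$. Let $X_0^\infty$ be the backward reachable set of $Z$ within $X$ (defined in the context). Consider the primal linear program $$p := \sup \int_X 1\, d\mu_0 \quad\text{s.t.}\quad \nu + \mu = f_*\nu + \mu_0,\quad \mu_0+\hat\mu_0=\lambda_X,\quad \mu_0,\hat\mu_0,\nu\in\mathcal{M}_+(X),\quad \mu\in\mathcal{M}_+(Z),$$ and the dual linear program $$d := \inf \int_X w\, d\lambda_X \quad\text{s.t.}\quad v(x)-v(f(x))\ge 0\ \forall x\in X,\quad w(x)-v(x)-1\ge 0\ \forall x\in X,\quad w(x)\ge 0\ \forall x\in X,\quad v(x)\ge 0\ \forall x\in Z,\quad v,w\in\mathcal{C}(X).$$ Suppose there exists a constant $M>0$ such that for every feasible solution $(\mu_0,\hat\mu_0,\nu,\mu)$ of the primal program, $\int_X 1\,d\nu < M$. Then: (a) If $f(X)\subseteq X$, the primal program admits an optimal solution $(\mu_0^*,\hat\mu_0^*,\nu^*,\mu^* )$ with $\mu_0^*=\lambda_{X_0^\infty}$, and its optimal value equals the Lebesgue volume of $X_0^\infty$. (b) There is no duality gap between the primal and the dual programs, i.e. $p=d$.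
   Context: A basic semi-algebraic set is a set of the form $\{x\in\mathbb{R}^n: h_i(x)\ge 0,\ i=1,\dots,k\}$ with $h_i$ real polynomials. For $T\in\mathbb{N}$, the $T$-step backward reachable set is $X_0^T:=\{x_0\in X:\ f^t(x_0)\in Z \text{ for some } 0\le t\le T,\ \text{and } f^{s}(x_0)\in X \text{ for all } 0\le s\le t\}$, where $f^t$ denotes the $t$-fold composition; $X_0^\infty:=\bigcup_{T\ge 0}X_0^T$. $\mathcal{C}(X)$ is the space of continuous real functions on $X$; $\mathcal{M}_+(A)$ denotes the cone of finite nonnegative Borel measures supported on $A$. $\lambda_A$ denotes the restriction of Lebesgue measure to a Borel set $A$. For a measurable map $p$ and measure $\nu$, the pushforward is $p_*\nu(B):=\nu(p^{-1}(B))$. The equation $\nu+\mu=f_*\nu+\mu_0$ is an equality of Borel measures on $\mathbb{R}^n$. *)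

theory Defs
  imports "HOL-Analysis.Analysis"
begin

inductive_set poly_fun :: "((real ^ 'n) \<Rightarrow> real) set" where
  const: "(\<lambda>x. c) \<in> poly_fun"
| coord: "(\<lambda>x. x $ i) \<in> poly_fun"
| add: "p \<in> poly_fun \<Longrightarrow> q \<in> poly_fun \<Longrightarrow> (\<lambda>x. p x + q x) \<in> poly_fun"
| mult: "p \<in> poly_fun \<Longrightarrow> q \<in> poly_fun \<Longrightarrow> (\<lambda>x. p x * q x) \<in> poly_fun"

definition poly_map :: "((real ^ 'n) \<Rightarrow> (real ^ 'n)) \<Rightarrow> bool" where
  "poly_map f \<longleftrightarrow> (\<forall>i. (\<lambda>x. f x $ i) \<in> poly_fun)"

definition basic_semialgebraic :: "(real ^ 'n) set \<Rightarrow> bool" where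
  "basic_semialgebraic S \<longleftrightarrow>
     (\<exists>hs :: ((real ^ 'n) \<Rightarrow> real) list. (\<forall>h\<in>set hs. h \<in> poly_fun) \<and>
        S = {x. \<forall>h\<in>set hs. h x \<ge> 0})"

definition backreach :: "(real ^ 'n) set \<Rightarrow> (real ^ 'n) set \<Rightarrow> ((real ^ 'n) \<Rightarrow> (real ^ 'n)) \<Rightarrow> nat \<Rightarrow> (real ^ 'n) set" where
  "backreach X Z f T = {x0 \<in> X. \<exists>t\<le>T. (f ^^ t) x0 \<in> Z \<and> (\<forall>s\<le>t. (f ^^ s) x0 \<in> X)}"

definition backreach_inf :: "(real ^ 'n) set \<Rightarrow> (real ^ 'n) set \<Rightarrow> ((real ^ 'n) \<Rightarrow> (real ^ 'n)) \<Rightarrow> (real ^ 'n) set" where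
  "backreach_inf X Z f = (\<Union>T. backreach X Z f T)"

text \<open>Finite nonnegative Borel measure on R^n supported on A (element of M_+(A)).\<close>
definition meas_on :: "(real ^ 'n) set \<Rightarrow> (real ^ 'n) measure \<Rightarrow> bool" where
  "meas_on A m \<longleftrightarrow> sets m = sets borel \<and> finite_measure m \<and> emeasure m (UNIV - A) = 0"

definition primal_feasible :: "(real ^ 'n) set \<Rightarrow> (real ^ 'n) set \<Rightarrow> ((real ^ 'n) \<Rightarrow> (real ^ 'n))
    \<Rightarrow> (real ^ 'n) measure \<Rightarrow> (real ^ 'n) measure \<Rightarrow> (real ^ 'n) measure \<Rightarrow> (real ^ 'n) measure \<Rightarrow> bool" where
  "primal_feasible X Z f \<mu>0 \<mu>0h \<nu> \<mu> \<longleftrightarrow>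
     meas_on X \<mu>0 \<and> meas_on X \<mu>0h \<and> meas_on X \<nu> \<and> meas_on Z \<mu> \<and>
     (\<forall>B\<in>sets borel. emeasure \<nu> B + emeasure \<mu> B = emeasure (distr \<nu> borel f) B + emeasure \<mu>0 B) \<and>
     (\<forall>B\<in>sets borel. emeasure \<mu>0 B + emeasure \<mu>0h B = emeasure lborel (B \<inter> X))"

definition primal_value :: "(real ^ 'n) set \<Rightarrow> (real ^ 'n) set \<Rightarrow> ((real ^ 'n) \<Rightarrow> (real ^ 'n)) \<Rightarrow> real" where
  "primal_value X Z f = Sup {measure \<mu>0 X | \<mu>0 \<mu>0h \<nu> \<mu>. primal_feasible X Z f \<mu>0 \<mu>0h \<nu> \<mu>}"

definition dual_feasible :: "(real ^ 'n) set \<Rightarrow> (real ^ 'n) set \<Rightarrow> ((real ^ 'n) \<Rightarrow> (real ^ 'n))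
    \<Rightarrow> ((real ^ 'n) \<Rightarrow> real) \<Rightarrow> ((real ^ 'n) \<Rightarrow> real) \<Rightarrow> bool" where
  "dual_feasible X Z f v w \<longleftrightarrow>
     continuous_on X v \<and> continuous_on X w \<and>
     (\<forall>x\<in>X. v x - v (f x) \<ge> 0) \<and>
     (\<forall>x\<in>X. w x - v x - 1 \<ge> 0) \<and>
     (\<forall>x\<in>X. w x \<ge> 0) \<and>
     (\<forall>x\<in>Z. v x \<ge> 0)"

definition dual_value :: "(real ^ 'n) set \<Rightarrow> (real ^ 'n) set \<Rightarrow> ((real ^ 'n) \<Rightarrow> (real ^ 'n)) \<Rightarrow> real" where
  "dual_value X Z f = Inf {(LINT x:X|lborel. w x) | v w. dual_feasible X Z f v w}"

end

(*
  The bound on the mass of \<nu> rules out orbits that stay in X forever: the points with such orbits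
  form a compact forward-invariant set, which carries an f-invariant probability measure
  (Krylov-Bogoliubov), and every multiple of it is a feasible \<nu> with \<mu>0 = \<mu> = 0. By compactness
  every orbit from X then leaves X within a uniform number T of steps, so the backward reachable
  set is the closed set R = X_0^T. On X - R the balance \<nu> + \<mu> = f_*\<nu> + \<mu>0 forces \<mu>0 = 0,
  hence p \<le> vol R; conversely, transporting Lebesgue measure on R along the orbits until they
  first hit Z gives a feasible solution with \<mu>0 = \<lambda>_R. On the dual side, v \<ge> 0 on R by backward
  induction from Z, so the cost of a feasible (v, w) is at least vol R, and continuous cut-offs of
  the indicator of R built from distance functions give feasible pairs whose cost tends to vol R.
*)
theory Submission
  imports Defs "HOL-Probability.Probability"
begin

lemma poly_fun_continuous_on: "p \<in> poly_fun \<Longrightarrow> continuous_on UNIV p"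
  by (induction rule: poly_fun.induct) (auto intro!: continuous_intros continuous_on_component)

lemma poly_map_continuous_on:
  assumes "poly_map f"
  shows "continuous_on UNIV f"
proof -
  have "continuous_on UNIV (\<lambda>x. \<chi> i. f x $ i)"
    using assms poly_fun_continuous_on unfolding poly_map_def by (intro continuous_on_vec_lambda) auto
  then show ?thesis by simp
qed

lemma continuous_on_funpow:
  fixes f :: "'a::topological_space \<Rightarrow> 'a"
  assumes "continuous_on UNIV f"
  shows "continuous_on UNIV (f ^^ t)"
proof (induction t)
  case (Suc t)
  have "continuous_on UNIV (f \<circ> (f ^^ t))"
    by (rule continuous_on_compose[OF Suc]) (use assms continuous_on_subset in blast)
  then show ?case by simp
qed simp

section \<open>Coding bounded subsets of \<open>\<real>\<^sup>n\<close> by the unit interval\<close>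

lemma suminf_diff_le_geometric_tail:
  fixes a b :: "nat \<Rightarrow> real"
  assumes "summable a" "summable b" and agree: "\<forall>i<m. a i = b i"
    and bound: "\<forall>i. \<bar>a i - b i\<bar> \<le> C * q ^ i" and "0 \<le> q" "q < 1"
  shows "\<bar>suminf a - suminf b\<bar> \<le> C * q ^ m / (1 - q)"
proof -
  define e where "e i = a i - b i" for i
  have "summable e" unfolding e_def using assms(1,2) by (rule summable_diff)
  have "suminf a - suminf b = suminf e" unfolding e_def using assms(1,2) by (rule suminf_diff)
  also have "\<dots> = (\<Sum>n. e (n + m))"
    using suminf_split_initial_segment[OF \<open>summable e\<close>, of m] agree by (simp add: e_def)
  finally have tail: "suminf a - suminf b = (\<Sum>n. e (n + m))" .
  have geometric: "summable (\<lambda>n. C * q ^ m * q ^ n)"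
    using assms(5,6) by (intro summable_mult summable_geometric) auto
  have e_bound: "norm (norm (e (n + m))) \<le> C * q ^ m * q ^ n" for n
    using bound[rule_format, of "n + m"] by (simp add: e_def power_add mult_ac)
  have summable_norm_e: "summable (\<lambda>n. norm (e (n + m)))"
    by (rule summable_comparison_test'[OF geometric]) (use e_bound in auto)
  have "\<bar>\<Sum>n. e (n + m)\<bar> \<le> (\<Sum>n. norm (e (n + m)))"
    using summable_norm[OF summable_norm_e] by simp
  also have "\<dots> \<le> (\<Sum>n. C * q ^ m * q ^ n)"
    by (rule suminf_le[OF _ summable_norm_e geometric]) (use e_bound in auto)
  also have "\<dots> = C * q ^ m / (1 - q)"
    using assms(5,6) by (subst suminf_mult) (auto simp: suminf_geometric divide_inverse)
  finally show ?thesis using tail by simp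
qed

definition cantor_point :: "(nat \<Rightarrow> bool) \<Rightarrow> real" where
  "cantor_point d = (\<Sum>k. (if d k then 2 else 0) / 3 ^ Suc k)"

lemma summable_cantor_digits: "summable (\<lambda>k. (if d k then 2 else 0) / (3::real) ^ Suc k)"
proof (rule summable_comparison_test'[of "\<lambda>k. 2 / 3 * (1 / 3) ^ k"])
  show "summable (\<lambda>k. 2 / 3 * (1 / 3 :: real) ^ k)" by (intro summable_mult summable_geometric) auto
  show "norm ((if d k then 2 else 0) / (3::real) ^ Suc k) \<le> 2 / 3 * (1 / 3) ^ k" for k
    by (auto simp: power_divide field_simps)
qed

lemma cantor_point_bounds: "cantor_point d \<in> {0..1}"
proof -
  have geometric: "summable (\<lambda>k. 2 / 3 * (1 / 3 :: real) ^ k)"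
    by (intro summable_mult summable_geometric) auto
  have "0 \<le> cantor_point d" unfolding cantor_point_def by (intro suminf_nonneg summable_cantor_digits) auto
  moreover have "cantor_point d \<le> (\<Sum>k. 2 / 3 * (1 / 3 :: real) ^ k)"
    unfolding cantor_point_def
    by (rule suminf_le[OF _ summable_cantor_digits geometric]) (auto simp: power_divide field_simps)
  moreover have "(\<Sum>k. 2 / 3 * (1 / 3 :: real) ^ k) = 1" by (subst suminf_mult) (auto simp: suminf_geometric)
  ultimately show ?thesis by simp
qed

text \<open>The digits 0 and 2 keep the tails of two codes apart: they differ by at most half of the
  gap created at the first differing digit.\<close>

lemma cantor_point_first_difference:
  assumes "\<forall>i<k. d i = d' i" "d k \<noteq> d' k"
  shows "1 / 3 ^ Suc k \<le> \<bar>cantor_point d - cantor_point d'\<bar>"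
proof -
  define a where "a i = (if d i then 2 else 0) / (3::real) ^ Suc i" for i
  define b where "b i = (if d' i then 2 else 0) / (3::real) ^ Suc i" for i
  have sa: "summable a" "summable b" unfolding a_def b_def by (rule summable_cantor_digits)+
  have shifted: "summable (\<lambda>n. a (n + j))" "summable (\<lambda>n. b (n + j))" for j
    using sa by (auto simp: summable_iff_shift)
  have "cantor_point d - cantor_point d' = suminf a - suminf b"
    unfolding cantor_point_def a_def b_def ..
  also have "\<dots> = (\<Sum>n. a (n + k)) - (\<Sum>n. b (n + k))"
    using suminf_split_initial_segment[OF sa(1), of k] suminf_split_initial_segment[OF sa(2), of k]
      assms(1) by (simp add: a_def b_def)
  also have "\<dots> = (a k - b k) + ((\<Sum>n. a (n + Suc k)) - (\<Sum>n. b (n + Suc k)))"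
    using suminf_split_head[OF shifted(1)[of k]] suminf_split_head[OF shifted(2)[of k]] by simp
  finally have split: "cantor_point d - cantor_point d'
      = (a k - b k) + ((\<Sum>n. a (n + Suc k)) - (\<Sum>n. b (n + Suc k)))" .
  have "\<bar>(\<Sum>n. a (n + Suc k)) - (\<Sum>n. b (n + Suc k))\<bar> \<le> 2 / 3 ^ Suc (Suc k) * (1 / 3) ^ 0 / (1 - 1 / 3)"
    by (rule suminf_diff_le_geometric_tail[OF shifted])
      (auto simp: a_def b_def power_add power_divide field_simps)
  moreover have "\<bar>a k - b k\<bar> = 2 / 3 ^ Suc k" using assms(2) by (cases "d k") (auto simp: a_def b_def)
  moreover have "2 / 3 ^ Suc (Suc k) * (1 / 3) ^ 0 / (1 - 1 / 3) = 1 / (3::real) ^ Suc k"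
    by (simp add: field_simps)
  ultimately show ?thesis
    using split abs_triangle_ineq[of "cantor_point d - cantor_point d'"
        "- ((\<Sum>n. a (n + Suc k)) - (\<Sum>n. b (n + Suc k)))"] by simp
qed

lemma cantor_point_close_imp_agree:
  assumes "\<bar>cantor_point d - cantor_point d'\<bar> < 1 / 3 ^ m"
  shows "\<forall>k<m. d k = d' k"
proof (rule ccontr)
  assume "\<not> (\<forall>k<m. d k = d' k)"
  then obtain k where k: "k < m" "d k \<noteq> d' k" by auto
  define k0 where "k0 = (LEAST k. d k \<noteq> d' k)"
  have "d k0 \<noteq> d' k0" unfolding k0_def by (rule LeastI) (fact k(2))
  moreover have "k0 \<le> k" unfolding k0_def by (rule Least_le) (fact k(2))
  moreover have "\<forall>i<k0. d i = d' i" unfolding k0_def using not_less_Least by blast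
  ultimately have "1 / 3 ^ Suc k0 \<le> \<bar>cantor_point d - cantor_point d'\<bar>"
    by (intro cantor_point_first_difference) auto
  moreover have "(1::real) / 3 ^ m \<le> 1 / 3 ^ Suc k0"
    using \<open>k0 \<le> k\<close> k(1) by (intro divide_left_mono power_increasing) auto
  ultimately show False using assms by simp
qed

lemma inj_cantor_point: "inj cantor_point"
proof (rule injI)
  fix d d' assume "cantor_point d = cantor_point d'"
  then have "\<forall>k<Suc m. d k = d' k" for m by (intro cantor_point_close_imp_agree) simp
  then show "d = d'" by blast
qed

definition binary_digit :: "nat \<Rightarrow> real \<Rightarrow> bool" where
  "binary_digit i r \<longleftrightarrow> odd \<lfloor>2 ^ Suc i * r\<rfloor>"

lemma floor_double: "\<lfloor>2 * x\<rfloor> = 2 * \<lfloor>x\<rfloor> + (if odd \<lfloor>2 * x\<rfloor> then 1 else 0)" for x :: real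
proof -
  have "2 * \<lfloor>x\<rfloor> \<le> \<lfloor>2 * x\<rfloor>" "\<lfloor>2 * x\<rfloor> \<le> 2 * \<lfloor>x\<rfloor> + 1" by linarith+
  then show ?thesis by presburger
qed

lemma binary_digit_partial_sum:
  assumes "0 \<le> r" "r < 1"
  shows "(\<Sum>i<m. (if binary_digit i r then 1 else 0) / (2::real) ^ Suc i) = \<lfloor>2 ^ m * r\<rfloor> / 2 ^ m"
proof (induction m)
  case 0
  then show ?case using assms by (simp add: floor_eq_iff)
next
  case (Suc m)
  have "\<lfloor>2 ^ Suc m * r\<rfloor> = 2 * \<lfloor>2 ^ m * r\<rfloor> + (if binary_digit m r then 1 else 0)"
    using floor_double[of "2 ^ m * r"] unfolding binary_digit_def by (simp add: mult.assoc)
  then have digit: "real_of_int \<lfloor>2 ^ Suc m * r\<rfloor>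
      = 2 * real_of_int \<lfloor>2 ^ m * r\<rfloor> + (if binary_digit m r then 1 else 0)"
    by simp
  have "(\<Sum>i<Suc m. (if binary_digit i r then 1 else 0) / (2::real) ^ Suc i)
      = (2 * real_of_int \<lfloor>2 ^ m * r\<rfloor> + (if binary_digit m r then 1 else 0)) / 2 ^ Suc m"
    using Suc by (simp add: field_simps)
  also have "\<dots> = \<lfloor>2 ^ Suc m * r\<rfloor> / 2 ^ Suc m" by (simp only: digit)
  finally show ?case .
qed

lemma binary_digit_sums:
  assumes "0 \<le> r" "r < 1"
  shows "(\<lambda>i. (if binary_digit i r then 1 else 0) / (2::real) ^ Suc i) sums r"
  unfolding sums_def binary_digit_partial_sum[OF assms]
proof (rule tendsto_sandwich[of "\<lambda>n. r - (1 / 2) ^ n" _ _ "\<lambda>n. r"])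
  show "\<forall>\<^sub>F n in sequentially. r - (1 / 2) ^ n \<le> \<lfloor>2 ^ n * r\<rfloor> / (2::real) ^ n"
  proof (intro always_eventually allI)
    fix n :: nat
    have "(2 ^ n * r - 1) / 2 ^ n \<le> \<lfloor>2 ^ n * r\<rfloor> / (2::real) ^ n"
      by (intro divide_right_mono) (linarith, simp)
    then show "r - (1 / 2) ^ n \<le> \<lfloor>2 ^ n * r\<rfloor> / (2::real) ^ n"
      by (simp add: field_simps power_divide)
  qed
  show "\<forall>\<^sub>F n in sequentially. \<lfloor>2 ^ n * r\<rfloor> / (2::real) ^ n \<le> r"
    by (intro always_eventually allI) (simp add: field_simps)
  show "(\<lambda>n. r - (1 / 2) ^ n) \<longlonglongrightarrow> r"
    using tendsto_diff[OF tendsto_const LIMSEQ_realpow_zero[of "1 / 2"]] by simp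
qed simp

definition coord_index :: "'n::finite \<Rightarrow> nat" where
  "coord_index = (SOME idx. bij_betw idx UNIV {..<CARD('n)})"

lemma bij_coord_index: "bij_betw (coord_index :: 'n::finite \<Rightarrow> nat) UNIV {..<CARD('n)}"
proof -
  have "\<exists>idx :: 'n \<Rightarrow> nat. bij_betw idx UNIV {..<CARD('n)}"
    using ex_bij_betw_finite_nat[of "UNIV :: 'n set"] by (auto simp: atLeast0LessThan)
  then show ?thesis unfolding coord_index_def by (rule someI_ex)
qed

definition binary_vector :: "(nat \<Rightarrow> bool) \<Rightarrow> real ^ 'n::finite" where
  "binary_vector d = (\<chi> j. \<Sum>i. (if d (i * CARD('n) + coord_index j) then 1 else 0) / 2 ^ Suc i)"

definition binary_code :: "real ^ 'n::finite \<Rightarrow> nat \<Rightarrow> bool" where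
  "binary_code p k = binary_digit (k div CARD('n)) (p $ inv_into UNIV coord_index (k mod CARD('n)))"

lemma binary_vector_binary_code:
  fixes p :: "real ^ 'n::finite"
  assumes "\<forall>j. 0 \<le> p $ j \<and> p $ j < 1"
  shows "binary_vector (binary_code p) = p"
proof -
  have "binary_code p (i * CARD('n) + coord_index j) = binary_digit i (p $ j)" for i j
  proof -
    have "coord_index j < CARD('n)" "inv_into UNIV coord_index (coord_index j) = j"
      using bij_coord_index[where 'n='n] by (auto simp: bij_betw_def)
    then show ?thesis unfolding binary_code_def by simp
  qed
  then show ?thesis unfolding binary_vector_def using binary_digit_sums assms
    by (auto simp: vec_eq_iff sums_iff)
qed

lemma binary_vector_dist:
  assumes "\<forall>k < m * CARD('n::finite). d k = d' k"
  shows "dist (binary_vector d :: real ^ 'n) (binary_vector d') \<le> CARD('n) / 2 ^ m"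
proof -
  have geometric: "summable (\<lambda>i. 1 / 2 * (1 / 2 :: real) ^ i)"
    by (intro summable_mult summable_geometric) auto
  have summable: "summable (\<lambda>i. (if e i then 1 else 0) / (2::real) ^ Suc i)" for e
    by (rule summable_comparison_test'[OF geometric]) (auto simp: power_divide field_simps)
  have coordinate: "\<bar>binary_vector d $ j - binary_vector d' $ j\<bar> \<le> 1 / 2 ^ m" for j :: 'n
  proof -
    have j: "coord_index j < CARD('n)" using bij_coord_index[where 'n='n] by (auto simp: bij_betw_def)
    have agree: "i * CARD('n) + coord_index j < m * CARD('n)" if "i < m" for i
    proof -
      have "i * CARD('n) + coord_index j < Suc i * CARD('n)" using j by simp
      also have "\<dots> \<le> m * CARD('n)" using that by (intro mult_le_mono1) simp
      finally show ?thesis .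
    qed
    have "\<bar>binary_vector d $ j - binary_vector d' $ j\<bar> \<le> 1 / 2 * (1 / 2) ^ m / (1 - 1 / 2)"
      unfolding binary_vector_def vec_lambda_beta
      by (rule suminf_diff_le_geometric_tail[OF summable summable])
        (use assms agree in \<open>auto simp: power_divide field_simps\<close>)
    then show ?thesis by (simp add: power_divide)
  qed
  have "dist (binary_vector d :: real ^ 'n) (binary_vector d')
      \<le> (\<Sum>j\<in>UNIV. \<bar>(binary_vector d - binary_vector d' :: real ^ 'n) $ j\<bar>)"
    unfolding dist_norm by (rule norm_le_l1_cart)
  also have "\<dots> \<le> (\<Sum>j\<in>(UNIV :: 'n set). 1 / 2 ^ m)" using coordinate by (intro sum_mono) simp
  finally show ?thesis by simp
qed

lemma uniformly_continuous_on_binary_vector_cantor: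
  "uniformly_continuous_on (range cantor_point)
     (\<lambda>r. binary_vector (inv cantor_point r) :: real ^ 'n::finite)"
  unfolding uniformly_continuous_on_def
proof (intro allI impI)
  fix e :: real assume "e > 0"
  obtain m where "CARD('n) / e < 2 ^ m" using real_arch_pow[of 2 "CARD('n) / e"] by auto
  then have m: "CARD('n) / 2 ^ m < e" using \<open>e > 0\<close> by (simp add: field_simps)
  show "\<exists>\<delta>>0. \<forall>r\<in>range cantor_point. \<forall>r'\<in>range cantor_point. dist r' r < \<delta> \<longrightarrow>
      dist (binary_vector (inv cantor_point r') :: real ^ 'n) (binary_vector (inv cantor_point r)) < e"
  proof (intro exI[of _ "1 / 3 ^ (m * CARD('n))"] conjI ballI impI)
    fix r r' assume "r \<in> range cantor_point" "r' \<in> range cantor_point"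
      and close: "dist r' r < 1 / 3 ^ (m * CARD('n))"
    then obtain d d' where dd': "r = cantor_point d" "r' = cantor_point d'" by auto
    then have "\<forall>k < m * CARD('n). d' k = d k"
      using close by (intro cantor_point_close_imp_agree) (simp add: dist_real_def)
    then have "dist (binary_vector d' :: real ^ 'n) (binary_vector d) \<le> CARD('n) / 2 ^ m"
      by (rule binary_vector_dist)
    then show "dist (binary_vector (inv cantor_point r') :: real ^ 'n) (binary_vector (inv cantor_point r)) < e"
      using dd' m by (simp add: inv_f_f[OF inj_cantor_point])
  qed simp
qed

text \<open>The parametrisation runs through the Cantor set: digit sequences are coded into \<open>[0,1]\<close> by
  \<^const>\<open>cantor_point\<close> and decoded into \<open>\<real>\<^sup>n\<close> by \<^const>\<open>binary_vector\<close>; the decoding is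
  uniformly continuous on the Cantor set and extends continuously to \<open>\<real>\<close> by Tietze.\<close>

lemma continuous_parametrization_of_bounded:
  fixes K :: "(real ^ 'n) set"
  assumes "bounded K"
  obtains \<Phi> :: "real \<Rightarrow> real ^ 'n" and \<sigma> :: "real ^ 'n \<Rightarrow> real"
  where "continuous_on UNIV \<Phi>" "\<And>x. x \<in> K \<Longrightarrow> \<Phi> (\<sigma> x) = x \<and> \<sigma> x \<in> {0..1}"
proof -
  obtain B where B: "B > 0" "\<forall>x\<in>K. norm x \<le> B" using assms bounded_pos by blast
  define shrink :: "real ^ 'n \<Rightarrow> real ^ 'n" where "shrink x = (\<chi> j. (x $ j + B) / (4 * B))" for x
  define expand :: "real ^ 'n \<Rightarrow> real ^ 'n" where "expand p = (\<chi> j. 4 * B * p $ j - B)" for p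
  have expand_shrink: "expand (shrink x) = x" for x using B by (simp add: expand_def shrink_def vec_eq_iff)
  have "continuous_on UNIV expand" unfolding expand_def
    by (intro continuous_on_vec_lambda continuous_intros continuous_on_component continuous_on_id)
  have shrink_range: "\<forall>j. 0 \<le> shrink x $ j \<and> shrink x $ j < 1" if "x \<in> K" for x
  proof
    fix j
    have "\<bar>x $ j\<bar> \<le> B" using B(2) that component_le_norm_cart[of x j] by force
    then show "0 \<le> shrink x $ j \<and> shrink x $ j < 1" using B(1) by (auto simp: shrink_def field_simps)
  qed
  define \<gamma> :: "real \<Rightarrow> real ^ 'n" where "\<gamma> r = binary_vector (inv cantor_point r)" for r
  obtain \<gamma>1 where \<gamma>1: "uniformly_continuous_on (closure (range cantor_point)) \<gamma>1"
    "\<And>r. r \<in> range cantor_point \<Longrightarrow> \<gamma> r = \<gamma>1 r"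
    using uniformly_continuous_on_extension_on_closure[OF uniformly_continuous_on_binary_vector_cantor]
    unfolding \<gamma>_def by metis
  obtain \<gamma>2 where \<gamma>2: "continuous_on UNIV \<gamma>2" "\<And>r. r \<in> closure (range cantor_point) \<Longrightarrow> \<gamma>2 r = \<gamma>1 r"
    using Tietze_unbounded[OF uniformly_continuous_imp_continuous[OF \<gamma>1(1)], of UNIV]
    by (metis closed_closure closedin_closed_Int inf_top.left_neutral)
  show ?thesis
  proof (rule that[of "\<lambda>r. expand (\<gamma>2 r)" "\<lambda>x. cantor_point (binary_code (shrink x))"])
    show "continuous_on UNIV (\<lambda>r. expand (\<gamma>2 r))"
      using continuous_on_compose[OF \<gamma>2(1), of expand] \<open>continuous_on UNIV expand\<close>
        continuous_on_subset by (fastforce simp: o_def)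
    fix x assume "x \<in> K"
    have "\<gamma>2 (cantor_point (binary_code (shrink x))) = \<gamma> (cantor_point (binary_code (shrink x)))"
      using \<gamma>1(2) \<gamma>2(2) closure_subset by (metis rangeI subsetD)
    also have "\<dots> = shrink x"
      unfolding \<gamma>_def using inj_cantor_point binary_vector_binary_code[OF shrink_range[OF \<open>x \<in> K\<close>]]
      by (simp add: inv_f_f)
    finally show "expand (\<gamma>2 (cantor_point (binary_code (shrink x)))) = x \<and>
        cantor_point (binary_code (shrink x)) \<in> {0..1}"
      using expand_shrink cantor_point_bounds by simp
  qed
qed

section \<open>Invariant measures of continuous maps\<close>

definition cutoff :: "'a::metric_space set \<Rightarrow> real \<Rightarrow> 'a \<Rightarrow> real" where
  "cutoff F k x = max 0 (1 - k * infdist x F)"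

lemma cutoff_nonneg [simp]: "0 \<le> cutoff F k x"
  unfolding cutoff_def by simp

lemma cutoff_le_one: "0 \<le> k \<Longrightarrow> cutoff F k x \<le> 1"
  unfolding cutoff_def by (simp add: infdist_nonneg)

lemma cutoff_eq_one: "x \<in> F \<Longrightarrow> cutoff F k x = 1"
  unfolding cutoff_def by (simp add: infdist_zero)

lemma cutoff_eq_zero: "1 \<le> k * infdist x F \<Longrightarrow> cutoff F k x = 0"
  unfolding cutoff_def by simp

lemma continuous_on_cutoff: "continuous_on UNIV (cutoff F k)"
  unfolding cutoff_def by (intro continuous_intros continuous_on_infdist continuous_on_id)

lemma eventually_cutoff_eq_zero:
  assumes "closed F" "F \<noteq> {}" "x \<notin> F"
  shows "eventually (\<lambda>k. cutoff F k x = 0) at_top"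
proof -
  have d: "infdist x F > 0" using assms infdist_pos_not_in_closed by blast
  show ?thesis
    using eventually_ge_at_top[of "1 / infdist x F"]
  proof eventually_elim
    case (elim k)
    then show ?case using d by (intro cutoff_eq_zero) (simp add: field_simps)
  qed
qed

lemma cutoff_tendsto_indicator:
  assumes "closed F" "F \<noteq> {}"
  shows "(\<lambda>k. cutoff F (real k) x) \<longlonglongrightarrow> indicator F x"
proof (cases "x \<in> F")
  case True
  then show ?thesis by (simp add: cutoff_eq_one)
next
  case False
  have "eventually (\<lambda>k. cutoff F (real k) x = 0) sequentially"
    using eventually_compose_filterlim[OF eventually_cutoff_eq_zero[OF assms False]
        filterlim_real_sequentially] .
  then show ?thesis using False by (simp add: tendsto_eventually)
qed

lemma integral_cutoff_tendsto_measure: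
  fixes N :: "'a::topological_space measure" and \<phi> :: "'a \<Rightarrow> 'b::metric_space"
  assumes "finite_measure N" "sets N = sets borel" "closed F" "F \<noteq> {}" "continuous_on UNIV \<phi>"
  shows "(\<lambda>k. \<integral>x. cutoff F (real k) (\<phi> x) \<partial>N) \<longlonglongrightarrow> measure N (\<phi> -` F)"
proof -
  interpret N: finite_measure N by fact
  have measurable: "measurable N borel = measurable borel borel"
    by (rule measurable_cong_sets[OF assms(2) refl])
  have "space N = UNIV" using assms(2) by (metis sets_eq_imp_space_eq space_borel)
  have "\<phi> \<in> borel_measurable borel" using assms(5) by (rule borel_measurable_continuous_onI)
  then have "\<phi> -` F \<in> sets borel" using measurable_sets[of \<phi> borel borel F] assms(3) by simp
  have "(\<lambda>k. \<integral>x. cutoff F (real k) (\<phi> x) \<partial>N) \<longlonglongrightarrow> (\<integral>x. indicator (\<phi> -` F) x \<partial>N)"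
  proof (rule integral_dominated_convergence[where w="\<lambda>_. 1"])
    show "indicator (\<phi> -` F) \<in> borel_measurable N"
      using \<open>\<phi> -` F \<in> sets borel\<close> assms(2) by simp
    show "(\<lambda>x. cutoff F (real k) (\<phi> x)) \<in> borel_measurable N" for k
      unfolding measurable using assms(5)
      by (intro borel_measurable_continuous_onI continuous_on_compose2[OF continuous_on_cutoff]) auto
    show "AE x in N. norm (cutoff F (real k) (\<phi> x)) \<le> 1" for k
      by (intro AE_I2) (simp add: cutoff_le_one)
    show "AE x in N. (\<lambda>k. cutoff F (real k) (\<phi> x)) \<longlonglongrightarrow> indicator (\<phi> -` F) x"
      using cutoff_tendsto_indicator[OF assms(3,4)] by (intro AE_I2) (simp add: indicator_def)
  qed simp
  also have "(\<integral>x. indicator (\<phi> -` F) x \<partial>N) = measure N (\<phi> -` F)"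
    using \<open>space N = UNIV\<close> by simp
  finally show ?thesis .
qed

lemma distr_eq_if_integrals_invariant:
  fixes \<nu> :: "'a::metric_space measure" and f :: "'a \<Rightarrow> 'a"
  assumes "finite_measure \<nu>" "sets \<nu> = sets borel" "continuous_on UNIV f"
    and invariant: "\<And>(g :: 'a \<Rightarrow> real) B. continuous_on UNIV g \<Longrightarrow> (\<And>x. \<bar>g x\<bar> \<le> B) \<Longrightarrow>
      (\<integral>x. g (f x) \<partial>\<nu>) = (\<integral>x. g x \<partial>\<nu>)"
  shows "distr \<nu> borel f = \<nu>"
proof (rule measure_eqI_generator_eq[of "Collect closed" UNIV _ _ "\<lambda>_. UNIV"])
  interpret finite_measure \<nu> by fact
  have "space \<nu> = UNIV" using assms(2) by (metis sets_eq_imp_space_eq space_borel)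
  have f_measurable: "f \<in> measurable \<nu> borel"
    by (subst measurable_cong_sets[OF assms(2) refl]) (rule borel_measurable_continuous_onI[OF assms(3)])
  have "sets borel = sigma_sets UNIV (Collect closed)"
    by (subst borel_eq_closed) (simp add: sets_measure_of)
  then show "sets (distr \<nu> borel f) = sigma_sets UNIV (Collect closed)"
    "sets \<nu> = sigma_sets UNIV (Collect closed)"
    using assms(2) by simp_all
  show "emeasure (distr \<nu> borel f) UNIV \<noteq> \<infinity>" for i :: nat
    using f_measurable \<open>space \<nu> = UNIV\<close> by (simp add: emeasure_distr)
  fix F :: "'a set" assume "F \<in> Collect closed"
  then have "closed F" by simp
  show "emeasure (distr \<nu> borel f) F = emeasure \<nu> F"
  proof (cases "F = {}")
    case False
    have bound: "\<bar>cutoff F (real k) x\<bar> \<le> 1" for k x by (simp add: cutoff_le_one)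
    have "(\<lambda>k. \<integral>x. cutoff F (real k) x \<partial>\<nu>) \<longlonglongrightarrow> measure \<nu> (f -` F)"
      using integral_cutoff_tendsto_measure[OF assms(1,2) \<open>closed F\<close> False assms(3)]
      unfolding invariant[OF continuous_on_cutoff bound] .
    moreover have "(\<lambda>k. \<integral>x. cutoff F (real k) x \<partial>\<nu>) \<longlonglongrightarrow> measure \<nu> F"
      using integral_cutoff_tendsto_measure[OF assms(1,2) \<open>closed F\<close> False continuous_on_id] by simp
    ultimately have "measure \<nu> (f -` F) = measure \<nu> F" by (rule LIMSEQ_unique)
    moreover have "f -` F \<in> sets \<nu>"
      using measurable_sets[OF f_measurable, of F] \<open>closed F\<close> \<open>space \<nu> = UNIV\<close> by simp
    ultimately show ?thesis
      using f_measurable \<open>closed F\<close> \<open>space \<nu> = UNIV\<close> assms(2)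
      by (simp add: emeasure_distr emeasure_eq_measure)
  qed simp
qed (auto simp: Int_stable_def)

lemma empirical_measures_converge_along_subsequence:
  fixes y :: "nat \<Rightarrow> real ^ 'n"
  assumes "bounded (range y)"
  obtains \<nu> r where "prob_space \<nu>" "sets \<nu> = sets borel" "strict_mono r"
    "\<And>(g :: real ^ 'n \<Rightarrow> real) B. continuous_on UNIV g \<Longrightarrow> (\<And>x. \<bar>g x\<bar> \<le> B) \<Longrightarrow>
       (\<lambda>j. (\<Sum>t\<le>r j. g (y t)) / Suc (r j)) \<longlonglongrightarrow> (\<integral>x. g x \<partial>\<nu>)"
proof -
  obtain \<Phi> :: "real \<Rightarrow> real ^ 'n" and \<sigma> where "continuous_on UNIV \<Phi>"
    and \<Phi>: "\<And>x. x \<in> range y \<Longrightarrow> \<Phi> (\<sigma> x) = x \<and> \<sigma> x \<in> {0..1}"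
    using continuous_parametrization_of_bounded[OF assms] by blast
  define s where "s t = \<sigma> (y t)" for t
  have s: "\<Phi> (s t) = y t" "s t \<in> {0..1}" for t using \<Phi> by (auto simp: s_def)
  text \<open>Helly's selection theorem applies to the empirical measures of the real codes \<open>s t\<close>.\<close>
  define \<mu> where "\<mu> N = distr (measure_pmf (pmf_of_set {..N})) borel s" for N :: nat
  have \<mu>: "real_distribution (\<mu> N)" for N
    unfolding \<mu>_def real_distribution_def real_distribution_axioms_def
    by (auto intro!: prob_space.prob_space_distr measure_pmf.prob_space_axioms)
  have integral_\<mu>: "(\<integral>x. h x \<partial>\<mu> N) = (\<Sum>t\<le>N. h (s t)) / Suc N" if "h \<in> borel_measurable borel" for h N
  proof -
    have "(\<integral>x. h x \<partial>\<mu> N) = (\<integral>t. h (s t) \<partial>measure_pmf (pmf_of_set {..N}))"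
      unfolding \<mu>_def using that by (intro integral_distr) auto
    also have "\<dots> = (\<Sum>t\<le>N. h (s t)) / card {..N}" by (rule integral_pmf_of_set) auto
    finally show ?thesis by simp
  qed
  have "measure (\<mu> N) {-1<..1} = 1" for N
  proof -
    have "s -` {-1<..1} = UNIV" using s(2) by force
    then show ?thesis unfolding \<mu>_def by (subst measure_distr) auto
  qed
  then have "tight \<mu>" unfolding tight_def using \<mu> by (intro conjI allI impI exI[of _ "-1"] exI[of _ 1]) auto
  then obtain r M where "strict_mono (r :: nat \<Rightarrow> nat)" "real_distribution M"
    and weak: "weak_conv_m (\<mu> \<circ> r) M"
    using tight_imp_convergent_subsubsequence[of \<mu> id] by (auto simp: strict_mono_def)
  interpret M: real_distribution M by fact
  have "\<Phi> \<in> borel_measurable borel" using \<open>continuous_on UNIV \<Phi>\<close> by (rule borel_measurable_continuous_onI)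
  show ?thesis
  proof (rule that[of "distr M borel \<Phi>" r])
    show "prob_space (distr M borel \<Phi>)"
      by (rule M.prob_space_distr) (use \<open>\<Phi> \<in> borel_measurable borel\<close> in simp)
    fix g :: "real ^ 'n \<Rightarrow> real" and B assume g: "continuous_on UNIV g" "\<And>x. \<bar>g x\<bar> \<le> B"
    have "g \<in> borel_measurable borel" using g(1) by (rule borel_measurable_continuous_onI)
    have "continuous_on UNIV (\<lambda>x. g (\<Phi> x))"
      using continuous_on_compose2[OF g(1) \<open>continuous_on UNIV \<Phi>\<close>] by simp
    then have "(\<lambda>j. \<integral>x. g (\<Phi> x) \<partial>(\<mu> \<circ> r) j) \<longlonglongrightarrow> (\<integral>x. g (\<Phi> x) \<partial>M)"
      using weak \<mu> g(2) \<open>real_distribution M\<close>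
      by (intro weak_conv_imp_integral_bdd_continuous_conv[where B=B])
        (auto simp: continuous_on_eq_continuous_at comp_def)
    moreover have "(\<integral>x. g (\<Phi> x) \<partial>(\<mu> \<circ> r) j) = (\<Sum>t\<le>r j. g (y t)) / Suc (r j)" for j
      using integral_\<mu>[of "\<lambda>x. g (\<Phi> x)" "r j"] \<open>g \<in> borel_measurable borel\<close>
        \<open>\<Phi> \<in> borel_measurable borel\<close> by (simp add: s)
    moreover have "(\<integral>x. g (\<Phi> x) \<partial>M) = (\<integral>x. g x \<partial>distr M borel \<Phi>)"
      using \<open>g \<in> borel_measurable borel\<close> \<open>\<Phi> \<in> borel_measurable borel\<close> by (subst integral_distr) auto
    ultimately show "(\<lambda>j. (\<Sum>t\<le>r j. g (y t)) / Suc (r j)) \<longlonglongrightarrow> (\<integral>x. g x \<partial>distr M borel \<Phi>)"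
      by simp
  qed (simp_all add: \<open>strict_mono r\<close>)
qed

lemma orbit_averages_shift_tendsto_zero:
  fixes g :: "'a \<Rightarrow> real"
  assumes "\<And>x. \<bar>g x\<bar> \<le> B"
  shows "(\<lambda>N. (\<Sum>t\<le>N. g (f ((f ^^ t) x0))) / Suc N - (\<Sum>t\<le>N. g ((f ^^ t) x0)) / Suc N) \<longlonglongrightarrow> 0"
proof -
  define y where "y t = (f ^^ t) x0" for t
  have "(\<Sum>t\<le>N. g (f (y t))) - (\<Sum>t\<le>N. g (y t)) = g (y (Suc N)) - g (y 0)" for N
    using sum_Suc_diff[of 0 N "\<lambda>t. g (y t)"] by (simp add: y_def sum_subtractf atLeast0AtMost)
  then have telescope: "(\<Sum>t\<le>N. g (f (y t))) / Suc N - (\<Sum>t\<le>N. g (y t)) / Suc N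
      = (g (y (Suc N)) - g (y 0)) / Suc N" for N
    by (simp add: diff_divide_distrib[symmetric])
  have "(\<lambda>N. (g (y (Suc N)) - g (y 0)) / Suc N) \<longlonglongrightarrow> 0"
  proof (rule Lim_null_comparison)
    show "\<forall>\<^sub>F N in sequentially. norm ((g (y (Suc N)) - g (y 0)) / Suc N) \<le> 2 * B * inverse (Suc N)"
    proof (intro always_eventually allI)
      fix N
      have "\<bar>g (y (Suc N)) - g (y 0)\<bar> \<le> 2 * B" using assms[of "y 0"] assms[of "y (Suc N)"] by arith
      then show "norm ((g (y (Suc N)) - g (y 0)) / Suc N) \<le> 2 * B * inverse (Suc N)"
        by (simp add: divide_inverse abs_mult mult_right_mono)
    qed
    show "(\<lambda>N. 2 * B * inverse (real (Suc N))) \<longlonglongrightarrow> 0"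
      using tendsto_mult_right_zero[OF LIMSEQ_inverse_real_of_nat] by simp
  qed
  then show ?thesis unfolding telescope[unfolded y_def] y_def .
qed

text \<open>The invariant measure is a weak limit of the empirical measures along an orbit in \<open>K\<close>.\<close>

theorem Krylov_Bogoliubov:
  fixes f :: "real ^ 'n \<Rightarrow> real ^ 'n" and K :: "(real ^ 'n) set"
  assumes "continuous_on UNIV f" "compact K" "x0 \<in> K" "f ` K \<subseteq> K"
  obtains \<nu> where "prob_space \<nu>" "sets \<nu> = sets borel" "emeasure \<nu> (UNIV - K) = 0"
    "distr \<nu> borel f = \<nu>"
proof -
  define y where "y t = (f ^^ t) x0" for t
  have y: "y t \<in> K" for t by (induction t) (use assms(3,4) in \<open>auto simp: y_def\<close>)
  then have "range y \<subseteq> K" by auto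
  then have "bounded (range y)" using compact_imp_bounded[OF assms(2)] by (rule bounded_subset[rotated])
  obtain \<nu> r where \<nu>: "prob_space \<nu>" "sets \<nu> = sets borel" "strict_mono r"
    and averages: "\<And>(g :: real ^ 'n \<Rightarrow> real) B. continuous_on UNIV g \<Longrightarrow> (\<And>x. \<bar>g x\<bar> \<le> B) \<Longrightarrow>
      (\<lambda>j. (\<Sum>t\<le>r j. g (y t)) / Suc (r j)) \<longlonglongrightarrow> (\<integral>x. g x \<partial>\<nu>)"
    using empirical_measures_converge_along_subsequence[OF \<open>bounded (range y)\<close>] by auto
  interpret prob_space \<nu> by fact
  have "space \<nu> = UNIV" using \<nu>(2) by (metis sets_eq_imp_space_eq space_borel)
  have "distr \<nu> borel f = \<nu>"
  proof (rule distr_eq_if_integrals_invariant[OF finite_measure_axioms \<nu>(2) assms(1)])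
    fix g :: "real ^ 'n \<Rightarrow> real" and B assume g: "continuous_on UNIV g" "\<And>x. \<bar>g x\<bar> \<le> B"
    have "(\<lambda>j. (\<Sum>t\<le>r j. g (f (y t))) / Suc (r j) - (\<Sum>t\<le>r j. g (y t)) / Suc (r j)) \<longlonglongrightarrow> 0"
      using LIMSEQ_subseq_LIMSEQ[OF orbit_averages_shift_tendsto_zero[OF g(2)] \<nu>(3)]
      by (simp add: comp_def y_def)
    moreover have "(\<lambda>j. (\<Sum>t\<le>r j. g (f (y t))) / Suc (r j) - (\<Sum>t\<le>r j. g (y t)) / Suc (r j))
        \<longlonglongrightarrow> (\<integral>x. g (f x) \<partial>\<nu>) - (\<integral>x. g x \<partial>\<nu>)"
      using averages[of "\<lambda>x. g (f x)" B] continuous_on_compose2[OF g(1) assms(1)] g(2) averages[OF g]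
      by (intro tendsto_diff) auto
    ultimately have "(\<integral>x. g (f x) \<partial>\<nu>) - (\<integral>x. g x \<partial>\<nu>) = 0"
      by (rule LIMSEQ_unique[rotated])
    then show "(\<integral>x. g (f x) \<partial>\<nu>) = (\<integral>x. g x \<partial>\<nu>)" by simp
  qed
  moreover have "measure \<nu> K = 1"
  proof -
    have "(\<lambda>k. \<integral>x. cutoff K (real k) x \<partial>\<nu>) \<longlonglongrightarrow> measure \<nu> K"
      using integral_cutoff_tendsto_measure[OF finite_measure_axioms \<nu>(2) compact_imp_closed[OF assms(2)]
          _ continuous_on_id] assms(3) by auto
    moreover have "(\<integral>x. cutoff K (real k) x \<partial>\<nu>) = 1" for k
    proof -
      have "(\<lambda>j. (\<Sum>t\<le>r j. cutoff K (real k) (y t)) / Suc (r j)) \<longlonglongrightarrow> (\<integral>x. cutoff K (real k) x \<partial>\<nu>)"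
        by (intro averages[OF continuous_on_cutoff, of _ _ 1]) (simp add: cutoff_le_one)
      moreover have "(\<lambda>j. (\<Sum>t\<le>r j. cutoff K (real k) (y t)) / Suc (r j)) = (\<lambda>j. 1)"
        using y by (simp add: cutoff_eq_one del: of_nat_Suc)
      ultimately show ?thesis by (simp add: LIMSEQ_const_iff)
    qed
    ultimately show ?thesis by (simp add: LIMSEQ_const_iff)
  qed
  then have "emeasure \<nu> (UNIV - K) = 0"
    using prob_compl[of K] compact_imp_closed[OF assms(2)] \<nu>(2) \<open>space \<nu> = UNIV\<close>
    by (simp add: emeasure_eq_measure)
  ultimately show ?thesis using that \<nu>(1,2) by blast
qed

section \<open>Bounded occupation mass forces a uniform exit time\<close>

lemma invariant_measure_primal_feasible:
  assumes "compact X" "finite_measure \<nu>" "sets \<nu> = sets borel" "emeasure \<nu> (UNIV - X) = 0"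
    and "distr \<nu> borel f = \<nu>"
  shows "primal_feasible X Z f (null_measure borel) (density lborel (indicator X)) \<nu> (null_measure borel)"
proof -
  have "X \<in> sets borel" using compact_imp_closed[OF assms(1)] by simp
  then have "emeasure (density lborel (indicator X)) B = emeasure lborel (B \<inter> X)" if "B \<in> sets borel" for B
    using that by (simp add: emeasure_restricted Int_commute)
  moreover have "emeasure lborel X < \<infinity>" using emeasure_compact_finite[OF assms(1)] by (simp add: less_top)
  moreover have "(UNIV - X) \<inter> X = {}" by blast
  ultimately show ?thesis
    using assms(2-5) \<open>X \<in> sets borel\<close>
    by (auto simp: primal_feasible_def meas_on_def intro!: finite_measureI)
qed

lemma bounded_primal_mass_imp_orbit_exits:
  fixes X Z :: "(real ^ 'n) set" and f :: "real ^ 'n \<Rightarrow> real ^ 'n"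
  assumes "compact X" "continuous_on UNIV f"
    and bound: "\<forall>\<mu>0 \<mu>0h \<nu> \<mu>. primal_feasible X Z f \<mu>0 \<mu>0h \<nu> \<mu> \<longrightarrow> emeasure \<nu> X < ennreal M"
  shows "\<exists>s. (f ^^ s) x \<notin> X"
proof (rule ccontr)
  define K where "K = {x. \<forall>s. (f ^^ s) x \<in> X}"
  assume "\<nexists>s. (f ^^ s) x \<notin> X"
  then have "x \<in> K" by (simp add: K_def)
  have "K \<subseteq> X" unfolding K_def by (auto dest: spec[of _ 0])
  have "K = (\<Inter>s. (f ^^ s) -` X)" unfolding K_def by auto
  then have "closed K"
    using continuous_on_funpow[OF assms(2)] compact_imp_closed[OF assms(1)]
    by (auto intro!: closed_INT closed_vimage)
  moreover have "X \<inter> K = K" using \<open>K \<subseteq> X\<close> by blast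
  ultimately have "compact K" using compact_Int_closed[OF assms(1)] by metis
  have "f ` K \<subseteq> K"
  proof clarify
    fix x assume "x \<in> K"
    then have "(f ^^ Suc s) x \<in> X" for s unfolding K_def by blast
    then show "f x \<in> K" unfolding K_def by (simp add: funpow_Suc_right del: funpow.simps)
  qed
  obtain \<nu> where \<nu>: "prob_space \<nu>" "sets \<nu> = sets borel" "emeasure \<nu> (UNIV - K) = 0"
    "distr \<nu> borel f = \<nu>"
    using Krylov_Bogoliubov[OF assms(2) \<open>compact K\<close> \<open>x \<in> K\<close> \<open>f ` K \<subseteq> K\<close>] by blast
  interpret prob_space \<nu> by fact
  have "space \<nu> = UNIV" using \<nu>(2) by (metis sets_eq_imp_space_eq space_borel)
  have f_measurable: "f \<in> measurable \<nu> borel"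
    by (subst measurable_cong_sets[OF \<nu>(2) refl]) (rule borel_measurable_continuous_onI[OF assms(2)])
  define \<nu>' where "\<nu>' = scale_measure (ennreal M) \<nu>"
  have "emeasure \<nu> (UNIV - X) = 0"
    using emeasure_mono[of "UNIV - X" "UNIV - K" \<nu>] \<open>K \<subseteq> X\<close> \<open>closed K\<close> \<nu>(2,3) by auto
  moreover have "distr \<nu>' borel f = \<nu>'"
  proof (rule measure_eqI)
    fix B :: "(real ^ 'n) set" assume "B \<in> sets (distr \<nu>' borel f)"
    then show "emeasure (distr \<nu>' borel f) B = emeasure \<nu>' B"
      using f_measurable \<nu>(4)[THEN arg_cong[of _ _ "\<lambda>N. emeasure N B"]]
      by (simp add: \<nu>'_def emeasure_distr \<open>space \<nu> = UNIV\<close> space_scale_measure)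
  qed (simp add: \<nu>'_def \<nu>(2))
  ultimately have "primal_feasible X Z f (null_measure borel) (density lborel (indicator X)) \<nu>' (null_measure borel)"
    using \<nu>(2) \<open>space \<nu> = UNIV\<close> emeasure_space_1
    by (intro invariant_measure_primal_feasible[OF assms(1)]) (auto simp: \<nu>'_def space_scale_measure intro!: finite_measureI)
  then have "emeasure \<nu>' X < ennreal M" using bound by blast
  moreover have "emeasure \<nu> X = 1"
    using prob_compl[of X] \<open>emeasure \<nu> (UNIV - X) = 0\<close> compact_imp_closed[OF assms(1)] \<nu>(2) \<open>space \<nu> = UNIV\<close>
    by (simp add: emeasure_eq_measure)
  ultimately show False by (simp add: \<nu>'_def)
qed

lemma uniform_exit_time:
  fixes X :: "'a::metric_space set" and f :: "'a \<Rightarrow> 'a"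
  assumes "compact X" "continuous_on UNIV f" and exits: "\<And>x. \<exists>s. (f ^^ s) x \<notin> X"
  shows "\<exists>T. \<forall>x\<in>X. \<exists>s\<le>T. (f ^^ s) x \<notin> X"
proof (rule ccontr)
  assume "\<nexists>T. \<forall>x\<in>X. \<exists>s\<le>T. (f ^^ s) x \<notin> X"
  then have "\<forall>T. \<exists>x\<in>X. \<forall>s\<le>T. (f ^^ s) x \<in> X" by blast
  then obtain x where x: "\<And>T. x T \<in> X" "\<And>T s. s \<le> T \<Longrightarrow> (f ^^ s) (x T) \<in> X" by metis
  obtain l r where "strict_mono r" and lim: "(x \<circ> r) \<longlonglongrightarrow> l"
    using assms(1)[unfolded compact_eq_seq_compact_metric seq_compact_def] x(1) by metis
  have "(f ^^ s) l \<in> X" for s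
  proof -
    have "(\<lambda>j. (f ^^ s) ((x \<circ> r) j)) \<longlonglongrightarrow> (f ^^ s) l"
      using continuous_on_funpow[OF assms(2)] lim
      by (intro continuous_on_tendsto_compose[OF continuous_on_funpow[OF assms(2)]]) (auto simp: o_def)
    moreover have "\<forall>\<^sub>F j in sequentially. (f ^^ s) ((x \<circ> r) j) \<in> X"
      unfolding eventually_sequentially
    proof (intro exI[of _ s] allI impI)
      fix j assume "s \<le> j"
      then show "(f ^^ s) ((x \<circ> r) j) \<in> X" using x(2) seq_suble[OF \<open>strict_mono r\<close>, of j] by simp
    qed
    ultimately show ?thesis by (rule Lim_in_closed_set[OF compact_imp_closed[OF assms(1)], rotated -1]) simp
  qed
  then show False using exits by blast
qed

lemma backreach_subset: "backreach X Z f t \<subseteq> X"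
  unfolding backreach_def by auto

lemma subset_backreach: "Z \<subseteq> X \<Longrightarrow> Z \<subseteq> backreach X Z f t"
  unfolding backreach_def by force

lemma backreach_mono: "t \<le> t' \<Longrightarrow> backreach X Z f t \<subseteq> backreach X Z f t'"
  unfolding backreach_def using le_trans by blast

lemma closed_backreach:
  assumes "closed X" "closed Z" "continuous_on UNIV f"
  shows "closed (backreach X Z f t)"
proof -
  have "backreach X Z f t = (\<Union>t'\<in>{..t}. X \<inter> (f ^^ t') -` Z \<inter> (\<Inter>s\<in>{..t'}. (f ^^ s) -` X))"
    unfolding backreach_def by auto
  also have "closed \<dots>"
    using assms continuous_on_funpow[OF assms(3)]
    by (intro closed_UN closed_Int closed_INT) (auto intro: closed_vimage)
  finally show ?thesis .
qed

lemma backreach_Suc_if_image: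
  assumes "x \<in> X" "f x \<in> backreach X Z f t"
  shows "x \<in> backreach X Z f (Suc t)"
proof -
  obtain t' where t': "t' \<le> t" "(f ^^ t') (f x) \<in> Z" "\<forall>s\<le>t'. (f ^^ s) (f x) \<in> X"
    using assms(2) unfolding backreach_def by auto
  have "(f ^^ s) x \<in> X" if "s \<le> Suc t'" for s
    using t'(3) assms(1) that by (cases s) (auto simp: funpow_Suc_right simp del: funpow.simps)
  moreover have "(f ^^ Suc t') x \<in> Z" using t'(2) by (simp add: funpow_Suc_right del: funpow.simps)
  ultimately show ?thesis using assms(1) t'(1) unfolding backreach_def by (intro CollectI conjI exI[of _ "Suc t'"]) auto
qed

lemma dual_feasible_nonneg_on_backreach:
  assumes "dual_feasible X Z f v w" "x \<in> backreach X Z f t"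
  shows "v x \<ge> 0"
proof -
  have "v x \<ge> 0" if "(f ^^ t) x \<in> Z" "\<forall>s\<le>t. (f ^^ s) x \<in> X" for t x
    using that
  proof (induction t arbitrary: x)
    case 0
    then show ?case using assms(1) unfolding dual_feasible_def by auto
  next
    case (Suc t)
    have "v (f x) \<ge> 0"
      using Suc.prems by (intro Suc.IH) (auto simp: funpow_Suc_right simp del: funpow.simps)
    moreover have "x \<in> X" using Suc.prems(2)[rule_format, of 0] by simp
    ultimately show ?case using assms(1) unfolding dual_feasible_def by force
  qed
  then show ?thesis using assms(2) unfolding backreach_def by blast
qed

locale uniform_exit =
  fixes X Z :: "(real ^ 'n) set" and f :: "real ^ 'n \<Rightarrow> real ^ 'n" and T :: nat
  assumes compact_X: "compact X" and compact_Z: "compact Z" and Z_subset_X: "Z \<subseteq> X"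
    and continuous_f: "continuous_on UNIV f"
    and exit: "\<forall>x\<in>X. \<exists>s\<le>T. (f ^^ s) x \<notin> X"
begin

abbreviation reach :: "(real ^ 'n) set" where
  "reach \<equiv> backreach X Z f T"

lemma closed_X: "closed X" using compact_X by (rule compact_imp_closed)
lemma closed_Z: "closed Z" using compact_Z by (rule compact_imp_closed)

lemma borel_measurable_funpow [measurable]: "(f ^^ t) \<in> borel_measurable borel"
  by (rule borel_measurable_continuous_onI[OF continuous_on_funpow[OF continuous_f]])

lemma borel_measurable_f [measurable]: "f \<in> borel_measurable borel"
  using borel_measurable_funpow[of 1] by simp

lemma sets_X [measurable]: "X \<in> sets borel" using closed_X by simp

lemma sets_backreach [measurable]: "backreach X Z f t \<in> sets borel"
  using closed_backreach[OF closed_X closed_Z continuous_f] by simp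

lemma backreach_subset_reach: "backreach X Z f t \<subseteq> reach"
proof
  fix x assume "x \<in> backreach X Z f t"
  then obtain t' where t': "x \<in> X" "(f ^^ t') x \<in> Z" "\<forall>s\<le>t'. (f ^^ s) x \<in> X"
    unfolding backreach_def by auto
  moreover obtain s where "s \<le> T" "(f ^^ s) x \<notin> X" using exit t'(1) by blast
  ultimately have "t' \<le> T" by (meson le_trans nat_le_linear)
  then show "x \<in> reach" using t' unfolding backreach_def by blast
qed

lemma backreach_inf_eq_reach: "backreach_inf X Z f = reach"
  unfolding backreach_inf_def using backreach_subset_reach by blast

lemma reach_if_image_in_reach: "x \<in> X \<Longrightarrow> f x \<in> reach \<Longrightarrow> x \<in> reach"
  using backreach_Suc_if_image backreach_subset_reach by blast

lemma emeasure_lborel_subset_X_finite: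
  assumes "S \<subseteq> X"
  shows "emeasure lborel S < \<infinity>"
proof -
  have "emeasure lborel S \<le> emeasure lborel X" using assms by (intro emeasure_mono) auto
  then show ?thesis using emeasure_compact_finite[OF compact_X] by (simp add: le_less_trans less_top)
qed

end

section \<open>The primal problem\<close>

definition sum_measure :: "'a measure \<Rightarrow> 'i set \<Rightarrow> ('i \<Rightarrow> 'a measure) \<Rightarrow> 'a measure" where
  "sum_measure M I m = measure_of (space M) (sets M) (\<lambda>A. \<Sum>i\<in>I. emeasure (m i) A)"

lemma sets_sum_measure [simp]: "sets (sum_measure M I m) = sets M"
  unfolding sum_measure_def by (simp add: sets.space_closed)

lemma emeasure_sum_measure:
  assumes "\<And>i. i \<in> I \<Longrightarrow> sets (m i) = sets M" "A \<in> sets M"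
  shows "emeasure (sum_measure M I m) A = (\<Sum>i\<in>I. emeasure (m i) A)"
  unfolding sum_measure_def
proof (rule emeasure_measure_of_sigma)
  show "countably_additive (sets M) (\<lambda>A. \<Sum>i\<in>I. emeasure (m i) A)"
    unfolding countably_additive_def
  proof (intro allI impI)
    fix F :: "nat \<Rightarrow> _" assume F: "range F \<subseteq> sets M" "disjoint_family F" "\<Union> (range F) \<in> sets M"
    have "(\<Sum>n. \<Sum>i\<in>I. emeasure (m i) (F n)) = (\<Sum>i\<in>I. \<Sum>n. emeasure (m i) (F n))"
      by (rule suminf_sum) auto
    also have "\<dots> = (\<Sum>i\<in>I. emeasure (m i) (\<Union> (range F)))"
      using F assms(1) by (intro sum.cong refl suminf_emeasure) auto
    finally show "(\<Sum>n. \<Sum>i\<in>I. emeasure (m i) (F n)) = (\<Sum>i\<in>I. emeasure (m i) (\<Union> (range F)))" .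
  qed
qed (use assms in \<open>auto simp: positive_def sets.sigma_algebra_axioms\<close>)

lemma emeasure_distr_restricted_lborel:
  fixes g :: "'a::euclidean_space \<Rightarrow> 'b::topological_space"
  assumes [measurable]: "S \<in> sets borel" "B \<in> sets borel" "g \<in> borel_measurable borel"
  shows "emeasure (distr (density lborel (indicator S)) borel g) B = emeasure lborel (S \<inter> g -` B)"
proof -
  have "emeasure (distr (density lborel (indicator S)) borel g) B
      = emeasure (density lborel (indicator S)) (g -` B)"
    by (simp add: emeasure_distr)
  also have "\<dots> = emeasure lborel (S \<inter> g -` B)"
    using measurable_sets[OF assms(3,2)] by (simp add: emeasure_restricted)
  finally show ?thesis .
qed

lemma primal_feasible_balance:
  assumes "primal_feasible X Z f \<mu>0 \<mu>0h \<nu> \<mu>" "f \<in> borel_measurable borel" "B \<in> sets borel"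
  shows "emeasure \<nu> B + emeasure \<mu> B = emeasure \<nu> (f -` B) + emeasure \<mu>0 B"
proof -
  have "sets \<nu> = sets borel" using assms(1) by (simp add: primal_feasible_def meas_on_def)
  then have "space \<nu> = UNIV" "f \<in> measurable \<nu> borel"
    using assms(2) measurable_cong_sets[of \<nu> borel borel borel] by (auto dest: sets_eq_imp_space_eq)
  then show ?thesis using assms(1,3) by (simp add: primal_feasible_def emeasure_distr)
qed

context uniform_exit
begin

text \<open>On \<open>X - reach\<close> the balance equation lets \<open>\<nu>\<close> only grow under pull-back by \<open>f\<close>, while
  \<open>\<mu>\<close> vanishes there; as \<open>\<nu>\<close> is finite, no mass of \<open>\<mu>0\<close> is left for \<open>X - reach\<close>.\<close>

lemma primal_feasible_unreached_null:
  assumes F: "primal_feasible X Z f \<mu>0 \<mu>0h \<nu> \<mu>"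
  shows "emeasure \<mu>0 (X - reach) = 0"
proof -
  note F' = F[unfolded primal_feasible_def meas_on_def]
  interpret \<nu>: finite_measure \<nu> using F' by auto
  have sets: "sets \<mu>0 = sets borel" "sets \<nu> = sets borel" "sets \<mu> = sets borel" using F' by auto
  note balance = primal_feasible_balance[OF F borel_measurable_f]
  define A where "A = X - reach"
  have A [measurable]: "A \<in> sets borel" unfolding A_def by measurable
  have compl_X [measurable]: "UNIV - X \<in> sets borel" using closed_X by (simp add: borel_open open_Diff)
  have preimage: "f -` B \<in> sets borel" if "B \<in> sets borel" for B
    using measurable_sets[OF borel_measurable_f that] by simp
  have "emeasure \<mu> (UNIV - X) \<le> emeasure \<mu> (UNIV - Z)" "emeasure \<mu> A \<le> emeasure \<mu> (UNIV - Z)"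
    using Z_subset_X subset_backreach[OF Z_subset_X] sets closed_Z
    by (auto simp: A_def open_Diff intro!: emeasure_mono borel_open)
  then have "emeasure \<mu> (UNIV - X) = 0" "emeasure \<mu> A = 0" using F' by auto
  then have "emeasure \<nu> (f -` (UNIV - X)) = 0"
    using balance[of "UNIV - X"] F' by simp
  have "A \<subseteq> f -` A \<union> f -` (UNIV - X)"
    using reach_if_image_in_reach by (auto simp: A_def)
  then have "emeasure \<nu> A \<le> emeasure \<nu> (f -` A \<union> f -` (UNIV - X))"
    using sets preimage by (intro emeasure_mono) auto
  also have "\<dots> \<le> emeasure \<nu> (f -` A) + emeasure \<nu> (f -` (UNIV - X))"
    using sets preimage by (intro emeasure_subadditive) auto
  finally have "emeasure \<nu> A \<le> emeasure \<nu> (f -` A)"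
    using \<open>emeasure \<nu> (f -` (UNIV - X)) = 0\<close> by simp
  then have "emeasure \<nu> (f -` A) + emeasure \<mu>0 A \<le> emeasure \<nu> (f -` A) + 0"
    using balance[OF A] \<open>emeasure \<mu> A = 0\<close> by simp
  then show ?thesis
    using ennreal_add_left_cancel_le \<nu>.emeasure_finite[of "f -` A"] by (simp add: A_def)
qed

lemma primal_objective_le: 
  assumes F: "primal_feasible X Z f \<mu>0 \<mu>0h \<nu> \<mu>"
  shows "measure \<mu>0 X \<le> measure lborel reach"
proof -
  note F' = F[unfolded primal_feasible_def meas_on_def]
  have sets: "sets \<mu>0 = sets borel" "sets \<mu>0h = sets borel" using F' by auto
  have "emeasure \<mu>0 X = emeasure \<mu>0 reach + emeasure \<mu>0 (X - reach)"
    using backreach_subset[of X Z f T] sets by (subst plus_emeasure) (auto simp: Un_absorb1)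
  also have "\<dots> = emeasure \<mu>0 reach" using primal_feasible_unreached_null[OF F] by simp
  also have "\<dots> \<le> emeasure \<mu>0 reach + emeasure \<mu>0h reach" by simp
  also have "\<dots> = emeasure lborel reach"
    using F' backreach_subset[of X Z f T] by (simp add: Int_absorb2)
  finally show ?thesis
    using emeasure_lborel_subset_X_finite[OF backreach_subset] by (simp add: measure_def enn2real_mono)
qed

definition reached_before :: "nat \<Rightarrow> (real ^ 'n) set" where
  "reached_before t = (if t = 0 then {} else backreach X Z f (t - 1))"

text \<open>The optimal primal solution transports Lebesgue measure on \<open>reach\<close> along the orbits:
  \<open>\<nu>\<close> collects the orbit points before the first visit to \<open>Z\<close>, and \<open>\<mu>\<close> the first visits.\<close>

definition occupation_measure :: "(real ^ 'n) measure" where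
  "occupation_measure = sum_measure borel {..T}
     (\<lambda>t. distr (density lborel (indicator (reach - backreach X Z f t))) borel (f ^^ t))"

definition hitting_measure :: "(real ^ 'n) measure" where
  "hitting_measure = sum_measure borel {..T}
     (\<lambda>t. distr (density lborel (indicator (backreach X Z f t - reached_before t))) borel (f ^^ t))"

definition reach_measure :: "(real ^ 'n) measure" where
  "reach_measure = density lborel (indicator reach)"

definition unreached_measure :: "(real ^ 'n) measure" where
  "unreached_measure = density lborel (indicator (X - reach))"

lemma sets_reached_before [measurable]: "reached_before t \<in> sets borel"
  unfolding reached_before_def by auto

lemma reached_before_subset: "reached_before t \<subseteq> backreach X Z f t"
  unfolding reached_before_def using backreach_mono[of "t - 1" t] by auto

lemma emeasure_occupation_measure:
  "B \<in> sets borel \<Longrightarrow>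
    emeasure occupation_measure B = (\<Sum>t\<le>T. emeasure lborel ((reach - backreach X Z f t) \<inter> (f ^^ t) -` B))"
  unfolding occupation_measure_def by (subst emeasure_sum_measure) (auto simp: emeasure_distr_restricted_lborel)

lemma emeasure_hitting_measure:
  "B \<in> sets borel \<Longrightarrow>
    emeasure hitting_measure B = (\<Sum>t\<le>T. emeasure lborel ((backreach X Z f t - reached_before t) \<inter> (f ^^ t) -` B))"
  unfolding hitting_measure_def by (subst emeasure_sum_measure) (auto simp: emeasure_distr_restricted_lborel)

lemma emeasure_reach_measure: "B \<in> sets borel \<Longrightarrow> emeasure reach_measure B = emeasure lborel (B \<inter> reach)"
  unfolding reach_measure_def by (subst emeasure_restricted) (auto simp: Int_commute)

lemma emeasure_unreached_measure:
  "B \<in> sets borel \<Longrightarrow> emeasure unreached_measure B = emeasure lborel (B \<inter> (X - reach))"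
  unfolding unreached_measure_def by (subst emeasure_restricted) (auto simp: Int_commute)

lemma funpow_in_X_before_hit:
  assumes "x \<in> reach" "x \<notin> backreach X Z f t"
  shows "(f ^^ t) x \<in> X"
proof -
  obtain t' where t': "(f ^^ t') x \<in> Z" "\<forall>s\<le>t'. (f ^^ s) x \<in> X"
    using assms(1) unfolding backreach_def by auto
  then have "\<not> t' \<le> t" using assms unfolding backreach_def by auto
  then show ?thesis using t'(2) by simp
qed

lemma funpow_in_Z_at_first_hit:
  assumes "x \<in> backreach X Z f t" "x \<notin> reached_before t"
  shows "(f ^^ t) x \<in> Z"
proof -
  obtain t' where t': "t' \<le> t" "(f ^^ t') x \<in> Z" "\<forall>s\<le>t'. (f ^^ s) x \<in> X" "x \<in> X"
    using assms(1) unfolding backreach_def by auto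
  have "t' = t"
  proof (rule ccontr)
    assume "t' \<noteq> t"
    then have "t' \<le> t - 1" "t \<noteq> 0" using t'(1) by auto
    then have "x \<in> reached_before t" using t' unfolding reached_before_def backreach_def by auto
    then show False using assms(2) by simp
  qed
  then show ?thesis using t' by simp
qed

lemma occupation_balance:
  assumes [measurable]: "B \<in> sets borel"
  shows "emeasure occupation_measure B + emeasure hitting_measure B
    = emeasure (distr occupation_measure borel f) B + emeasure reach_measure B"
proof -
  define a where "a t = emeasure lborel ((reach - reached_before t) \<inter> (f ^^ t) -` B)" for t
  define b where "b t = emeasure lborel ((reach - backreach X Z f t) \<inter> (f ^^ Suc t) -` B)" for t
  have "emeasure lborel ((reach - backreach X Z f t) \<inter> (f ^^ t) -` B)
      + emeasure lborel ((backreach X Z f t - reached_before t) \<inter> (f ^^ t) -` B) = a t"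
    if "t \<le> T" for t
  proof -
    have "backreach X Z f t \<subseteq> reach" using backreach_mono[OF that] .
    then have "(reach - reached_before t) \<inter> (f ^^ t) -` B
        = ((reach - backreach X Z f t) \<inter> (f ^^ t) -` B) \<union> ((backreach X Z f t - reached_before t) \<inter> (f ^^ t) -` B)"
      using reached_before_subset[of t] by blast
    then show ?thesis unfolding a_def by (subst plus_emeasure) auto
  qed
  then have "emeasure occupation_measure B + emeasure hitting_measure B = (\<Sum>t\<le>T. a t)"
    by (simp add: emeasure_occupation_measure emeasure_hitting_measure sum.distrib[symmetric])
  also have "\<dots> = a 0 + (\<Sum>t<T. b t)"
    unfolding sum.atMost_shift a_def b_def by (simp add: reached_before_def)
  also have "(\<Sum>t<T. b t) = (\<Sum>t\<le>T. b t)"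
    by (simp add: b_def lessThan_Suc_atMost[symmetric])
  also have "\<dots> = emeasure (distr occupation_measure borel f) B"
  proof -
    have "space occupation_measure = UNIV" by (simp add: occupation_measure_def sum_measure_def)
    moreover have "f \<in> measurable occupation_measure borel"
      by (simp add: occupation_measure_def measurable_cong_sets[OF sets_sum_measure refl])
    moreover have "(f ^^ t) -` (f -` B) = (f ^^ Suc t) -` B" for t by auto
    ultimately show ?thesis
      using measurable_sets[OF borel_measurable_f assms]
      by (simp add: emeasure_distr emeasure_occupation_measure b_def)
  qed
  also have "a 0 = emeasure reach_measure B"
    by (simp add: a_def reached_before_def emeasure_reach_measure Int_commute)
  finally show ?thesis by (simp add: add.commute)
qed

lemma primal_feasible_reach_measure:
  "primal_feasible X Z f reach_measure unreached_measure occupation_measure hitting_measure"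
  unfolding primal_feasible_def meas_on_def
proof (intro conjI ballI)
  show "sets reach_measure = sets borel" "sets unreached_measure = sets borel"
    "sets occupation_measure = sets borel" "sets hitting_measure = sets borel"
    by (simp_all add: reach_measure_def unreached_measure_def occupation_measure_def hitting_measure_def)
  then have space: "space reach_measure = UNIV" "space unreached_measure = UNIV"
    "space occupation_measure = UNIV" "space hitting_measure = UNIV"
    by (auto dest: sets_eq_imp_space_eq)
  have "reach - backreach X Z f t \<subseteq> X" "backreach X Z f t - reached_before t \<subseteq> X" for t
    using backreach_subset[of X Z f] by auto
  then show "finite_measure reach_measure" "finite_measure unreached_measure"
    "finite_measure occupation_measure" "finite_measure hitting_measure"
    using emeasure_lborel_subset_X_finite backreach_subset[of X Z f T] space
    by (auto intro!: finite_measureI simp: emeasure_reach_measure emeasure_unreached_measure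
        emeasure_occupation_measure emeasure_hitting_measure sum_Pinfty less_top[symmetric] Int_absorb1)
  have compl_X: "UNIV - X \<in> sets borel" using closed_X by (simp add: borel_open open_Diff)
  moreover have "(UNIV - X) \<inter> reach = {}" "(UNIV - X) \<inter> (X - reach) = {}"
    using backreach_subset[of X Z f T] by auto
  ultimately show "emeasure reach_measure (UNIV - X) = 0" "emeasure unreached_measure (UNIV - X) = 0"
    by (simp_all add: emeasure_reach_measure emeasure_unreached_measure)
  have "(reach - backreach X Z f t) \<inter> (f ^^ t) -` (UNIV - X) = {}" for t
    using funpow_in_X_before_hit by auto
  with compl_X show "emeasure occupation_measure (UNIV - X) = 0"
    by (simp add: emeasure_occupation_measure)
  have "UNIV - Z \<in> sets borel" using closed_Z by (simp add: borel_open open_Diff)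
  moreover have "(backreach X Z f t - reached_before t) \<inter> (f ^^ t) -` (UNIV - Z) = {}" for t
    using funpow_in_Z_at_first_hit by auto
  ultimately show "emeasure hitting_measure (UNIV - Z) = 0"
    by (simp add: emeasure_hitting_measure)
  fix B :: "(real ^ 'n) set" assume [measurable]: "B \<in> sets borel"
  show "emeasure occupation_measure B + emeasure hitting_measure B
      = emeasure (distr occupation_measure borel f) B + emeasure reach_measure B"
    by (rule occupation_balance) simp
  have "B \<inter> X = (B \<inter> reach) \<union> (B \<inter> (X - reach))" using backreach_subset[of X Z f T] by auto
  moreover have "emeasure lborel (B \<inter> reach) + emeasure lborel (B \<inter> (X - reach))
      = emeasure lborel ((B \<inter> reach) \<union> (B \<inter> (X - reach)))"
    by (rule plus_emeasure) auto
  ultimately show "emeasure reach_measure B + emeasure unreached_measure B = emeasure lborel (B \<inter> X)"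
    by (simp add: emeasure_reach_measure emeasure_unreached_measure)
qed

lemma primal_value_eq: "primal_value X Z f = measure lborel reach"
  unfolding primal_value_def
proof (rule cSup_eq_maximum)
  have "measure reach_measure X = measure lborel reach"
    using backreach_subset[of X Z f T] by (simp add: measure_def emeasure_reach_measure Int_absorb1)
  then show "measure lborel reach \<in> {measure \<mu>0 X |\<mu>0 \<mu>0h \<nu> \<mu>. primal_feasible X Z f \<mu>0 \<mu>0h \<nu> \<mu>}"
    using primal_feasible_reach_measure by force
qed (use primal_objective_le in auto)

end

section \<open>The dual problem\<close>

context uniform_exit
begin

lemma set_integral_indicator_reach: "(LINT x:X|lborel. indicator reach x) = measure lborel reach"
proof -
  have "(LINT x:X|lborel. indicator reach x) = (LINT x|lborel. indicator reach x)"
    unfolding set_lebesgue_integral_def using backreach_subset[of X Z f T]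
    by (intro Bochner_Integration.integral_cong) (auto simp: indicator_def)
  also have "\<dots> = measure lborel reach" by (simp add: Bochner_Integration.integral_indicator)
  finally show ?thesis .
qed

lemma dual_objective_ge:
  assumes F: "dual_feasible X Z f v w"
  shows "measure lborel reach \<le> (LINT x:X|lborel. w x)"
proof -
  have "continuous_on X w" using F by (simp add: dual_feasible_def)
  then have "set_integrable lborel X w"
    using borel_integrable_compact[OF compact_X \<open>continuous_on X w\<close>] by (simp add: set_integrable_def)
  moreover have "set_integrable lborel X (\<lambda>x. indicator reach x :: real)"
    using emeasure_lborel_subset_X_finite[OF backreach_subset] backreach_subset[of X Z f T]
    by (auto simp: set_integrable_def indicator_inter_arith[symmetric] Int_absorb1 less_top
        intro!: integrable_real_indicator)
  moreover have "indicator reach x \<le> w x" if "x \<in> X" for x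
    using F dual_feasible_nonneg_on_backreach[OF F, of x T] that
    unfolding dual_feasible_def indicator_def by force
  ultimately show ?thesis
    using set_integral_mono set_integral_indicator_reach by metis
qed

text \<open>Every orbit from \<open>X\<close> gets a uniform distance away from \<open>X\<close> within \<open>T\<close> steps: the
  continuous function summing these distances is positive on the compact set \<open>X\<close>.\<close>

lemma exit_margin:
  obtains \<delta> where "\<delta> > 0" "\<And>x. x \<in> X \<Longrightarrow> \<exists>s\<le>T. \<delta> \<le> infdist ((f ^^ s) x) X"
proof (cases "X = {}")
  case False
  define g where "g x = (\<Sum>s\<le>T. infdist ((f ^^ s) x) X)" for x
  have "continuous_on UNIV g"
    unfolding g_def
    by (intro continuous_intros continuous_on_compose2[OF continuous_on_infdist[OF continuous_on_id]
          continuous_on_funpow[OF continuous_f]]) auto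
  then have "continuous_on X g" by (rule continuous_on_subset) simp
  then obtain x0 where "x0 \<in> X" and x0: "\<And>x. x \<in> X \<Longrightarrow> g x0 \<le> g x"
    using continuous_attains_inf[OF compact_X False] by blast
  obtain s0 where "s0 \<le> T" "(f ^^ s0) x0 \<notin> X" using exit \<open>x0 \<in> X\<close> by blast
  then have "0 < infdist ((f ^^ s0) x0) X" using infdist_pos_not_in_closed[OF closed_X False] by blast
  also have "\<dots> \<le> g x0"
    unfolding g_def using \<open>s0 \<le> T\<close> by (intro member_le_sum) (auto simp: infdist_nonneg)
  finally have "g x0 > 0" .
  show ?thesis
  proof (rule that[of "g x0 / Suc T"])
    show "g x0 / Suc T > 0" using \<open>g x0 > 0\<close> by simp
    fix x assume "x \<in> X"
    show "\<exists>s\<le>T. g x0 / Suc T \<le> infdist ((f ^^ s) x) X"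
    proof (rule ccontr)
      assume "\<not> ?thesis"
      then have less: "infdist ((f ^^ s) x) X < g x0 / Suc T" if "s \<le> T" for s
        using that by (meson not_le)
      have "g x = (\<Sum>s\<le>T. infdist ((f ^^ s) x) X)" by (simp add: g_def)
      also have "\<dots> < (\<Sum>s\<le>T. g x0 / Suc T)" by (rule sum_strict_mono) (use less in auto)
      also have "\<dots> = g x0" by simp
      finally show False using x0[OF \<open>x \<in> X\<close>] by simp
    qed
  qed
qed (use that[of 1] in auto)

text \<open>Continuous approximations of the indicator of \<open>reach\<close>: \<open>reach_cutoff k T x\<close> is close to 1
  when for some \<open>t \<le> T\<close> the point \<open>(f ^^ t) x\<close> is close to \<open>Z\<close> and the earlier orbit points are close to \<open>X\<close>.\<close>

fun stay_cutoff :: "real \<Rightarrow> nat \<Rightarrow> real ^ 'n \<Rightarrow> real" where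
  "stay_cutoff k 0 x = cutoff X k x"
| "stay_cutoff k (Suc s) x = min (stay_cutoff k s x) (cutoff X k ((f ^^ Suc s) x))"

definition hit_cutoff :: "real \<Rightarrow> nat \<Rightarrow> real ^ 'n \<Rightarrow> real" where
  "hit_cutoff k t x = min (cutoff Z k ((f ^^ t) x)) (stay_cutoff k t x)"

fun reach_cutoff :: "real \<Rightarrow> nat \<Rightarrow> real ^ 'n \<Rightarrow> real" where
  "reach_cutoff k 0 x = hit_cutoff k 0 x"
| "reach_cutoff k (Suc t) x = max (reach_cutoff k t x) (hit_cutoff k (Suc t) x)"

lemma stay_cutoff_le: "s \<le> t \<Longrightarrow> stay_cutoff k t x \<le> cutoff X k ((f ^^ s) x)"
  by (induction t) (auto simp: le_Suc_eq min.coboundedI1)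

lemma stay_cutoff_nonneg: "0 \<le> stay_cutoff k t x"
  by (induction t) simp_all

lemma stay_cutoff_eq_one: "\<forall>s\<le>t. (f ^^ s) x \<in> X \<Longrightarrow> stay_cutoff k t x = 1"
  by (induction t) (auto simp: cutoff_eq_one)

lemma stay_cutoff_Suc: "0 \<le> k \<Longrightarrow> x \<in> X \<Longrightarrow> stay_cutoff k (Suc t) x = stay_cutoff k t (f x)"
proof (induction t)
  case 0
  then show ?case by (simp add: cutoff_eq_one cutoff_le_one)
next
  case (Suc t)
  then show ?case by (simp add: funpow_Suc_right del: funpow.simps)
qed

lemma hit_cutoff_Suc: "0 \<le> k \<Longrightarrow> x \<in> X \<Longrightarrow> hit_cutoff k (Suc t) x = hit_cutoff k t (f x)"
  unfolding hit_cutoff_def using stay_cutoff_Suc by (simp add: funpow_Suc_right del: funpow.simps)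

lemma hit_cutoff_nonneg: "0 \<le> hit_cutoff k t x"
  unfolding hit_cutoff_def by (simp add: stay_cutoff_nonneg)

lemma hit_cutoff_le_one: "0 \<le> k \<Longrightarrow> hit_cutoff k t x \<le> 1"
  unfolding hit_cutoff_def by (simp add: cutoff_le_one min.coboundedI1)

lemma hit_cutoff_le_reach_cutoff: "s \<le> t \<Longrightarrow> hit_cutoff k s x \<le> reach_cutoff k t x"
  by (induction t) (auto simp: le_Suc_eq max.coboundedI1)

lemma reach_cutoff_le: "(\<And>s. s \<le> t \<Longrightarrow> hit_cutoff k s x \<le> c) \<Longrightarrow> reach_cutoff k t x \<le> c"
  by (induction t) auto

lemma reach_cutoff_nonneg: "0 \<le> reach_cutoff k t x"
  using hit_cutoff_nonneg hit_cutoff_le_reach_cutoff[of 0 t k x] by (rule order_trans) simp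

lemma reach_cutoff_le_one: "0 \<le> k \<Longrightarrow> reach_cutoff k t x \<le> 1"
  by (rule reach_cutoff_le) (rule hit_cutoff_le_one)

lemma continuous_on_reach_cutoff: "continuous_on UNIV (reach_cutoff k t)"
proof -
  have cutoff_funpow: "continuous_on UNIV (\<lambda>x. cutoff F k ((f ^^ s) x))" for F s
    by (rule continuous_on_compose2[OF continuous_on_cutoff continuous_on_funpow[OF continuous_f]]) auto
  have stay: "continuous_on UNIV (stay_cutoff k s)" for s
  proof (induction s)
    case 0
    have "stay_cutoff k 0 = cutoff X k" by auto
    then show ?case using continuous_on_cutoff by simp
  next
    case (Suc s)
    have "stay_cutoff k (Suc s) = (\<lambda>x. min (stay_cutoff k s x) (cutoff X k ((f ^^ Suc s) x)))" by auto
    then show ?case using continuous_on_min[OF Suc cutoff_funpow[of X "Suc s"]] by (simp del: funpow.simps)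
  qed
  have hit: "continuous_on UNIV (hit_cutoff k s)" for s
    unfolding hit_cutoff_def by (intro continuous_on_min cutoff_funpow stay)
  show ?thesis
  proof (induction t)
    case 0
    have "reach_cutoff k 0 = hit_cutoff k 0" by auto
    then show ?case using hit by simp
  next
    case (Suc t)
    have "reach_cutoff k (Suc t) = (\<lambda>x. max (reach_cutoff k t x) (hit_cutoff k (Suc t) x))" by auto
    then show ?case using continuous_on_max[OF Suc hit] by simp
  qed
qed

lemma reach_cutoff_eq_one:
  assumes "0 \<le> k" "x \<in> reach"
  shows "reach_cutoff k T x = 1"
proof -
  obtain t where t: "t \<le> T" "(f ^^ t) x \<in> Z" "\<forall>s\<le>t. (f ^^ s) x \<in> X"
    using assms(2) unfolding backreach_def by auto
  then have "hit_cutoff k t x = 1" by (simp add: hit_cutoff_def cutoff_eq_one stay_cutoff_eq_one)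
  then show ?thesis
    using hit_cutoff_le_reach_cutoff[OF t(1), of k x] reach_cutoff_le_one[OF assms(1), of T x] by simp
qed

lemma eventually_hit_cutoff_eq_zero:
  assumes "Z \<noteq> {}" "x \<notin> reach" "t \<le> T"
  shows "eventually (\<lambda>k. hit_cutoff k t x = 0) at_top"
proof -
  have "X \<noteq> {}" using assms(1) Z_subset_X by auto
  have "\<not> ((f ^^ t) x \<in> Z \<and> (\<forall>s\<le>t. (f ^^ s) x \<in> X))"
    using assms(2,3) unfolding backreach_def by auto
  then consider "(f ^^ t) x \<notin> Z" | s where "s \<le> t" "(f ^^ s) x \<notin> X" by blast
  then show ?thesis
  proof cases
    case 1
    from eventually_cutoff_eq_zero[OF closed_Z assms(1) 1] show ?thesis
      by eventually_elim (simp add: hit_cutoff_def stay_cutoff_nonneg min_def)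
  next
    case 2
    from eventually_cutoff_eq_zero[OF closed_X \<open>X \<noteq> {}\<close> 2(2)] show ?thesis
    proof eventually_elim
      case (elim k)
      then have "stay_cutoff k t x = 0"
        using stay_cutoff_le[OF 2(1), of k x] stay_cutoff_nonneg[of k t x] by simp
      then show ?case by (simp add: hit_cutoff_def min_absorb2)
    qed
  qed
qed

lemma eventually_reach_cutoff_eq_zero:
  assumes "Z \<noteq> {}" "x \<notin> reach"
  shows "eventually (\<lambda>k. reach_cutoff k T x = 0) at_top"
proof -
  have "eventually (\<lambda>k. \<forall>t\<in>{..T}. hit_cutoff k t x = 0) at_top"
    using eventually_hit_cutoff_eq_zero[OF assms] by (intro eventually_ball_finite) auto
  then show ?thesis
  proof eventually_elim
    case (elim k)
    then have "reach_cutoff k T x \<le> 0" by (intro reach_cutoff_le) auto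
    then show ?case using reach_cutoff_nonneg[of k T x] by simp
  qed
qed

text \<open>Shifting an orbit by one step moves the hit at time \<open>t + 1\<close> to time \<open>t\<close>; the hit at
  time \<open>T + 1\<close> that could be gained vanishes once \<open>k \<delta> \<ge> 1\<close> for an exit margin \<open>\<delta>\<close>.\<close>

lemma reach_cutoff_image_le:
  assumes "0 < k" "1 \<le> k * \<delta>" "\<And>x. x \<in> X \<Longrightarrow> \<exists>s\<le>T. \<delta> \<le> infdist ((f ^^ s) x) X"
    and "x \<in> X"
  shows "reach_cutoff k T (f x) \<le> reach_cutoff k T x"
proof (rule reach_cutoff_le)
  fix s assume "s \<le> T"
  show "hit_cutoff k s (f x) \<le> reach_cutoff k T x"
  proof (cases "s < T")
    case True
    then show ?thesis
      using hit_cutoff_Suc[of k x s] assms(1,4) hit_cutoff_le_reach_cutoff[of "Suc s" T k x] by simp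
  next
    case False
    obtain s0 where "s0 \<le> T" "\<delta> \<le> infdist ((f ^^ s0) x) X" using assms(3,4) by blast
    then have "1 \<le> k * infdist ((f ^^ s0) x) X"
      using assms(1,2) by (meson mult_left_mono order_trans less_imp_le)
    then have "cutoff X k ((f ^^ s0) x) = 0" by (rule cutoff_eq_zero)
    then have "stay_cutoff k (Suc T) x \<le> 0"
      using stay_cutoff_le[of s0 "Suc T" k x] \<open>s0 \<le> T\<close> by (simp del: stay_cutoff.simps)
    then have "hit_cutoff k (Suc T) x \<le> 0" unfolding hit_cutoff_def by (simp add: min.coboundedI2)
    then have "hit_cutoff k s (f x) \<le> 0" using hit_cutoff_Suc[of k x T] assms(1,4) False \<open>s \<le> T\<close> by simp
    then show ?thesis using reach_cutoff_nonneg[of k T x] by simp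
  qed
qed

lemma dual_feasible_reach_cutoff:
  assumes "0 < k" "1 \<le> k * \<delta>" "\<And>x. x \<in> X \<Longrightarrow> \<exists>s\<le>T. \<delta> \<le> infdist ((f ^^ s) x) X"
  shows "dual_feasible X Z f (\<lambda>x. reach_cutoff k T x - 1) (reach_cutoff k T)"
  unfolding dual_feasible_def
proof (intro conjI ballI)
  show "continuous_on X (\<lambda>x. reach_cutoff k T x - 1)" "continuous_on X (reach_cutoff k T)"
    using continuous_on_subset[OF continuous_on_reach_cutoff, of X] by (auto intro!: continuous_intros)
  fix x assume "x \<in> X"
  show "0 \<le> reach_cutoff k T x - 1 - (reach_cutoff k T (f x) - 1)"
    using reach_cutoff_image_le[OF assms \<open>x \<in> X\<close>] by simp
  show "0 \<le> reach_cutoff k T x - (reach_cutoff k T x - 1) - 1" by simp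
  show "0 \<le> reach_cutoff k T x" by (rule reach_cutoff_nonneg)
next
  fix x assume "x \<in> Z"
  then have "x \<in> reach" using subset_backreach[OF Z_subset_X] by blast
  then show "0 \<le> reach_cutoff k T x - 1" using reach_cutoff_eq_one assms(1) by simp
qed

lemma set_integral_reach_cutoff_tendsto:
  assumes "Z \<noteq> {}"
  shows "((\<lambda>k. LINT x:X|lborel. reach_cutoff k T x) \<longlongrightarrow> measure lborel reach) at_top"
  unfolding set_integral_indicator_reach[symmetric] set_lebesgue_integral_def
proof (rule integral_dominated_convergence_at_top[where w="indicator X"])
  show "(\<lambda>x. indicator X x *\<^sub>R reach_cutoff k T x) \<in> borel_measurable lborel" for k
    using borel_measurable_continuous_onI[OF continuous_on_reach_cutoff, of k T] by simp
  show "integrable lborel (indicator X :: _ \<Rightarrow> real)"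
    using emeasure_lborel_subset_X_finite[of X] by (auto intro!: integrable_real_indicator)
  show "\<forall>\<^sub>F k in at_top. AE x in lborel. norm (indicator X x *\<^sub>R reach_cutoff k T x) \<le> indicator X x"
    using eventually_ge_at_top[of 0]
    by eventually_elim (auto simp: indicator_def reach_cutoff_nonneg reach_cutoff_le_one)
  show "AE x in lborel. ((\<lambda>k. indicator X x *\<^sub>R reach_cutoff k T x) \<longlongrightarrow> indicator X x *\<^sub>R indicator reach x) at_top"
  proof (intro AE_I2)
    fix x
    have "eventually (\<lambda>k. reach_cutoff k T x = indicator reach x) at_top"
    proof (cases "x \<in> reach")
      case True
      show ?thesis using eventually_ge_at_top[of 0] by eventually_elim (simp add: True reach_cutoff_eq_one)
    next
      case False
      show ?thesis using eventually_reach_cutoff_eq_zero[OF assms False] by eventually_elim (simp add: False)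
    qed
    then have "eventually (\<lambda>k. indicator X x *\<^sub>R reach_cutoff k T x = indicator X x *\<^sub>R indicator reach x) at_top"
      by eventually_elim simp
    then show "((\<lambda>k. indicator X x *\<^sub>R reach_cutoff k T x) \<longlongrightarrow> indicator X x *\<^sub>R indicator reach x) at_top"
      by (rule tendsto_eventually)
  qed
qed simp

lemma dual_objective_approx:
  assumes "\<epsilon> > 0"
  obtains v w where "dual_feasible X Z f v w" "(LINT x:X|lborel. w x) < measure lborel reach + \<epsilon>"
proof (cases "Z = {}")
  case True
  then have "dual_feasible X Z f (\<lambda>x. -1) (\<lambda>x. 0)" by (simp add: dual_feasible_def)
  moreover have "reach = {}" using True by (simp add: backreach_def)
  ultimately show ?thesis using assms by (intro that[of "\<lambda>x. -1" "\<lambda>x. 0"]) simp_all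
next
  case False
  obtain \<delta> where "\<delta> > 0" and margin: "\<And>x. x \<in> X \<Longrightarrow> \<exists>s\<le>T. \<delta> \<le> infdist ((f ^^ s) x) X"
    using exit_margin by auto
  have "eventually (\<lambda>k. (LINT x:X|lborel. reach_cutoff k T x) < measure lborel reach + \<epsilon>) at_top"
    using order_tendstoD(2)[OF set_integral_reach_cutoff_tendsto[OF False]] assms by simp
  moreover have "eventually (\<lambda>k. 1 \<le> k * \<delta> \<and> 0 < k) at_top"
    using eventually_ge_at_top[of "1 / \<delta>"] eventually_gt_at_top[of 0]
    by eventually_elim (use \<open>\<delta> > 0\<close> in \<open>simp add: field_simps\<close>)
  ultimately have "eventually (\<lambda>k. (LINT x:X|lborel. reach_cutoff k T x) < measure lborel reach + \<epsilon>
      \<and> 1 \<le> k * \<delta> \<and> 0 < k) at_top"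
    by (rule eventually_conj)
  then obtain k where "(LINT x:X|lborel. reach_cutoff k T x) < measure lborel reach + \<epsilon>"
    "1 \<le> k * \<delta>" "0 < k"
    unfolding eventually_at_top_linorder by auto
  then show ?thesis
    using that dual_feasible_reach_cutoff[OF \<open>0 < k\<close> \<open>1 \<le> k * \<delta>\<close> margin] by blast
qed

lemma dual_value_eq: "dual_value X Z f = measure lborel reach"
  unfolding dual_value_def
proof (rule antisym)
  define S where "S = {(LINT x:X|lborel. w x) | v w. dual_feasible X Z f v w}"
  have lower: "measure lborel reach \<le> y" if "y \<in> S" for y
    using that dual_objective_ge unfolding S_def by auto
  obtain v w where "dual_feasible X Z f v w" "(LINT x:X|lborel. w x) < measure lborel reach + 1"
    using dual_objective_approx[of 1] by auto
  then have "S \<noteq> {}" unfolding S_def by blast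
  then show "measure lborel reach \<le> Inf S" using lower by (rule cInf_greatest)
  have "bdd_below S" using lower by (rule bdd_belowI)
  show "Inf S \<le> measure lborel reach"
  proof (rule field_le_epsilon)
    fix \<epsilon> :: real assume "\<epsilon> > 0"
    then obtain v w where "dual_feasible X Z f v w" "(LINT x:X|lborel. w x) < measure lborel reach + \<epsilon>"
      using dual_objective_approx by auto
    moreover from this(1) have "(LINT x:X|lborel. w x) \<in> S" unfolding S_def by blast
    ultimately show "Inf S \<le> measure lborel reach + \<epsilon>"
      using cInf_lower[OF _ \<open>bdd_below S\<close>] by (meson less_imp_le order_trans)
  qed
qed

end

theorem proposition1:
  fixes X Z :: "(real ^ 'n) set" and f :: "real ^ 'n \<Rightarrow> real ^ 'n"
  assumes "compact X" and "basic_semialgebraic X"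
    and "compact Z" and "basic_semialgebraic Z" and "Z \<subseteq> X"
    and "poly_map f"
    and "\<exists>M::real. M > 0 \<and> (\<forall>\<mu>0 \<mu>0h \<nu> \<mu>. primal_feasible X Z f \<mu>0 \<mu>0h \<nu> \<mu> \<longrightarrow> emeasure \<nu> X < ennreal M)"
  shows "(f ` X \<subseteq> X \<longrightarrow>
            (\<exists>\<mu>0 \<mu>0h \<nu> \<mu>. primal_feasible X Z f \<mu>0 \<mu>0h \<nu> \<mu> \<and>
               (\<forall>B\<in>sets borel. emeasure \<mu>0 B = emeasure lborel (B \<inter> backreach_inf X Z f)) \<and>
               measure \<mu>0 X = primal_value X Z f) \<and>
            primal_value X Z f = measure lborel (backreach_inf X Z f))
       \<and> primal_value X Z f = dual_value X Z f"
proof -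
  obtain M :: real where
    bound: "\<forall>\<mu>0 \<mu>0h \<nu> \<mu>. primal_feasible X Z f \<mu>0 \<mu>0h \<nu> \<mu> \<longrightarrow> emeasure \<nu> X < ennreal M"
    using assms(7) by blast
  have "continuous_on UNIV f" using assms(6) by (rule poly_map_continuous_on)
  then have "\<exists>s. (f ^^ s) x \<notin> X" for x
    using bounded_primal_mass_imp_orbit_exits[OF assms(1) _ bound] by blast
  then obtain T where "\<forall>x\<in>X. \<exists>s\<le>T. (f ^^ s) x \<notin> X"
    using uniform_exit_time[OF assms(1) \<open>continuous_on UNIV f\<close>] by blast
  then interpret uniform_exit X Z f T
    using assms(1,3,5) \<open>continuous_on UNIV f\<close> by unfold_locales
  have "measure reach_measure X = measure lborel reach"
    using backreach_subset[of X Z f T] by (simp add: measure_def emeasure_reach_measure Int_absorb1)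
  moreover have "\<forall>B\<in>sets borel. emeasure reach_measure B = emeasure lborel (B \<inter> reach)"
    by (simp add: emeasure_reach_measure)
  ultimately show ?thesis
    unfolding backreach_inf_eq_reach primal_value_eq dual_value_eq
    using primal_feasible_reach_measure by blast
qed

end
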